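(* Let $\alpha,\gamma\in(0,1)$, $f\in C^1[0,1]$ with $f(0)=0$, $h=\dot f$, $D\in C^1[0,1]$ with $D>0$ on $(0,\alpha)$ and $D<0$ on $(\alpha,1)$, $g\in C^0[0,1]$ with $g<0$ on $(0,\gamma)$, $g>0$ on $(\gamma,1)$, $g(0)=g(\gamma)=g(1)=0$, and $q=Dg$. Let $c\in\mathbb R$ and assume one of the following: (a) Problem (P) has a solution and either (i) $\alpha\ne\gamma$, or (ii) $\alpha=\gamma$ and condition (G2) holds; (b) Problem (P') has a solution $z$ with $z(\gamma)=0$, $\alpha<\gamma$, and condition (G2) holds. Then the equation $\rho_t+f(\rho)_x=(D(\rho)\rho_x)_x+g(\rho)$ admits a wavefront with speed $c$ whose profile $\phi$ satisfies $\phi(-\infty)=1$, $\phi(+\infty)=0$.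
   Context: Condition (G2): there are $L>0$ and $\tau\in(0,1)$ with $|g(\phi)|\ge L|\phi-\gamma|^\tau$ in a full neighborhood of $\gamma$. Problem (P): find $z\in C^0[0,1]\cap C^1((0,1)\setminus\{\alpha\})$ with $\dot z=h-c-q/z$ on $(0,\alpha)\cup(\alpha,1)$, $z<0$ on $(0,\alpha)$, $z>0$ on $(\alpha,1)$, $z(0)=z(\alpha)=z(1)=0$. Problem (P'): find $z\in C^0[0,1]\cap C^1((0,1)\setminus\{\alpha,\gamma\})$ with $\dot z=h-c-q/z$ on $(0,\alpha)\cup(\alpha,\gamma)\cup(\gamma,1)$, $z<0$ on $(0,\alpha)$, $z>0$ on $(\alpha,\gamma)\cup(\gamma,1)$, $z(0)=z(\alpha)=z(1)=0$. A wavefront with speed $c$ and profile $\phi$: $\phi\in C(\mathbb R)$ with values in $[0,1]$, differentiable a.e., $D(\phi)\phi'\in L^1_{\rm loc}$, monotone non-constant, with $\int_{\mathbb R}(D(\phi)\phi'-f(\phi)+c\phi)\psi'-g(\phi)\psi\,d\xi=0$ for all $\psi\in C_0^\infty(\mathbb R)$. *)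

theory Defs
  imports "HOL-Analysis.Analysis"
begin

definition C1_01 :: "(real \<Rightarrow> real) \<Rightarrow> (real \<Rightarrow> real) \<Rightarrow> bool" where
  "C1_01 F F' \<longleftrightarrow> (\<forall>x\<in>{0..1}. (F has_real_derivative F' x) (at x within {0..1}))
                   \<and> continuous_on {0..1} F'"

definition C1_ode_on :: "real set \<Rightarrow> (real \<Rightarrow> real) \<Rightarrow> (real \<Rightarrow> real) \<Rightarrow> real \<Rightarrow> (real \<Rightarrow> real) \<Rightarrow> bool" where
  "C1_ode_on S z h c q \<longleftrightarrow> (\<forall>s\<in>S. z differentiable (at s)) \<and> continuous_on S (deriv z)
      \<and> (\<forall>s\<in>S. deriv z s = h s - c - q s / z s)"

definition problem_P :: "(real \<Rightarrow> real) \<Rightarrow> real \<Rightarrow> (real \<Rightarrow> real) \<Rightarrow> real \<Rightarrow> (real \<Rightarrow> real) \<Rightarrow> bool" where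
  "problem_P h c q \<alpha> z \<longleftrightarrow> continuous_on {0..1} z
      \<and> C1_ode_on ({0<..<1} - {\<alpha>}) z h c q
      \<and> (\<forall>s\<in>{0<..<\<alpha>}. z s < 0) \<and> (\<forall>s\<in>{\<alpha><..<1}. z s > 0)
      \<and> z 0 = 0 \<and> z \<alpha> = 0 \<and> z 1 = 0"

definition problem_P' :: "(real \<Rightarrow> real) \<Rightarrow> real \<Rightarrow> (real \<Rightarrow> real) \<Rightarrow> real \<Rightarrow> real \<Rightarrow> (real \<Rightarrow> real) \<Rightarrow> bool" where
  "problem_P' h c q \<alpha> \<gamma> z \<longleftrightarrow> continuous_on {0..1} z
      \<and> C1_ode_on ({0<..<1} - {\<alpha>, \<gamma>}) z h c q
      \<and> (\<forall>s\<in>{0<..<\<alpha>}. z s < 0) \<and> (\<forall>s\<in>({\<alpha><..<\<gamma>} \<union> {\<gamma><..<1}). z s > 0)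
      \<and> z 0 = 0 \<and> z \<alpha> = 0 \<and> z 1 = 0"

definition cond_G2 :: "(real \<Rightarrow> real) \<Rightarrow> real \<Rightarrow> bool" where
  "cond_G2 g \<gamma> \<longleftrightarrow> (\<exists>L \<tau> \<delta>. L > 0 \<and> 0 < \<tau> \<and> \<tau> < 1 \<and> \<delta> > 0 \<and>
      (\<forall>u. \<bar>u - \<gamma>\<bar> < \<delta> \<longrightarrow> \<bar>g u\<bar> \<ge> L * \<bar>u - \<gamma>\<bar> powr \<tau>))"

definition test_fun :: "(real \<Rightarrow> real) \<Rightarrow> bool" where
  "test_fun \<psi> \<longleftrightarrow> (\<forall>k x. (deriv ^^ k) \<psi> differentiable (at x))
      \<and> (\<exists>R. \<forall>x. R < \<bar>x\<bar> \<longrightarrow> \<psi> x = 0)"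

text \<open>Wavefront (weak sense) with speed c and profile \<phi> for
  rho_t + f(rho)_x = (D(rho) rho_x)_x + g(rho). The a.e. derivative of \<phi> is deriv \<phi>.\<close>
definition wavefront :: "(real \<Rightarrow> real) \<Rightarrow> (real \<Rightarrow> real) \<Rightarrow> (real \<Rightarrow> real) \<Rightarrow> real \<Rightarrow> (real \<Rightarrow> real) \<Rightarrow> bool" where
  "wavefront f D g c \<phi> \<longleftrightarrow>
      continuous_on UNIV \<phi> \<and> (\<forall>\<xi>. \<phi> \<xi> \<in> {0..1})
    \<and> (AE \<xi> in lebesgue. \<phi> differentiable (at \<xi>))
    \<and> (\<forall>a b. set_integrable lebesgue {a..b} (\<lambda>\<xi>. D (\<phi> \<xi>) * deriv \<phi> \<xi>))
    \<and> (mono \<phi> \<or> antimono \<phi>) \<and> \<not> (\<exists>k. \<forall>\<xi>. \<phi> \<xi> = k)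
    \<and> (\<forall>\<psi>. test_fun \<psi> \<longrightarrow>
         (let F = (\<lambda>\<xi>. (D (\<phi> \<xi>) * deriv \<phi> \<xi> - f (\<phi> \<xi>) + c * \<phi> \<xi>) * deriv \<psi> \<xi> - g (\<phi> \<xi>) * \<psi> \<xi>)
          in integrable lebesgue F \<and> (\<integral>\<xi>. F \<xi> \<partial>lebesgue) = 0))"

end

theory Submission
  imports Defs
begin

text \<open>The profile is the inverse of a primitive X of D/z: along a front,
  \<open>D(\<phi>)\<phi>' = z(\<phi>)\<close>, and the ODE for z says exactly that \<open>z(\<phi>) - f(\<phi>) + c\<phi>\<close> has
  derivative \<open>-g(\<phi>)\<close>, which is the weak form of the equation. On each interval where z
  has no zero, D/z is negative, so X is strictly decreasing; the pieces glue to one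
  decreasing function on (0,1) provided each piece stays bounded at the zeros of z.
  At \<open>\<alpha>\<close>, where D vanishes too, D/z is controlled through the lower bound
  \<open>|g(u)| \<ge> L|u - \<alpha>|\<^sup>\<tau>\<close> (automatic when \<open>g(\<alpha>) \<noteq> 0\<close>); at a zero \<open>\<gamma>\<close> of z
  with \<open>D(\<gamma>) < 0\<close> the same bound forces z to grow like \<open>|u - \<gamma>|\<^sup>\<beta>\<close>
  with \<open>\<beta> < 1\<close>, so D/z is integrable.\<close>

section \<open>Differential inequalities\<close>

lemma nonpos_if_deriv_nonpos_where_pos:
  fixes p :: "real \<Rightarrow> real"
  assumes "a \<le> b" and cont: "continuous_on {a..b} p" and "p a \<le> 0"
    and deriv: "\<And>x. x \<in> {a<..<b} \<Longrightarrow> 0 < p x \<Longrightarrow> \<exists>y. (p has_real_derivative y) (at x) \<and> y \<le> 0"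
  shows "p b \<le> 0"
proof (rule ccontr)
  assume pb: "\<not> p b \<le> 0"
  define S where "S = {t \<in> {a..b}. p t \<le> 0}"
  have "closed S"
    unfolding S_def
    using continuous_on_closed_Collect_le[OF cont continuous_on_const closed_atLeastAtMost, of 0] by simp
  moreover have "bounded S" unfolding S_def by (rule bounded_subset[of "{a..b}"]) auto
  moreover have "a \<in> S" using assms by (simp add: S_def)
  ultimately obtain t0 where t0: "t0 \<in> S" and last: "\<And>t. t \<in> S \<Longrightarrow> t \<le> t0"
    using compact_attains_sup[of S] compact_eq_bounded_closed by blast
  have t0b: "a \<le> t0" "t0 \<le> b" "p t0 \<le> 0" using t0 by (auto simp: S_def)
  have pos: "0 < p t" if "t0 < t" "t \<le> b" for t
    using last[of t] that t0b by (force simp: S_def)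
  have "p b \<le> p t0"
  proof (rule DERIV_nonpos_imp_decreasing_open[OF t0b(2)])
    show "continuous_on {t0..b} p" by (rule continuous_on_subset[OF cont]) (use t0b in auto)
    fix x assume "t0 < x" "x < b"
    then show "\<exists>y. (p has_real_derivative y) (at x) \<and> y \<le> 0"
      using deriv[of x] pos[of x] t0b by simp
  qed
  with t0b pb show False by simp
qed

lemma continuous_on_nonvanishing_sign:
  fixes a :: "real \<Rightarrow> real"
  assumes cont: "continuous_on {l<..<r} a" and nz: "\<And>t. t \<in> {l<..<r} \<Longrightarrow> a t \<noteq> 0"
  obtains e where "e = 1 \<or> e = -1" "\<And>t. t \<in> {l<..<r} \<Longrightarrow> \<bar>a t\<bar> = e * a t"
proof -
  have conn: "connected (a ` {l<..<r})" by (rule connected_continuous_image[OF cont]) simp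
  have "(\<forall>t\<in>{l<..<r}. 0 < a t) \<or> (\<forall>t\<in>{l<..<r}. a t < 0)"
  proof (rule ccontr)
    assume "\<not> ?thesis"
    then obtain x y where xy: "x \<in> {l<..<r}" "y \<in> {l<..<r}" "a x \<le> 0" "0 \<le> a y"
      by (auto simp: not_less)
    then have "0 \<in> a ` {l<..<r}"
      using connectedD_interval[OF conn, of "a x" "a y" 0] by blast
    then show False using nz by auto
  qed
  then show ?thesis
    using that[of 1] that[of "-1"] by (auto simp: abs_of_pos abs_of_neg)
qed

lemma bdd_below_if_deriv_dominated:
  fixes Y v Q Q' :: "real \<Rightarrow> real"
  assumes "0 < \<delta>"
    and Y: "\<And>t. t \<in> {0<..<\<delta>} \<Longrightarrow> (Y has_real_derivative v t) (at t)"
    and v: "\<And>t. t \<in> {0<..<\<delta>} \<Longrightarrow> 0 \<le> v t"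
    and Q: "\<And>t. t \<in> {0<..<\<delta>} \<Longrightarrow> (Q has_real_derivative Q' t) (at t)"
    and Q': "\<And>t. t \<in> {0<..<\<delta>} \<Longrightarrow> v t \<le> Q' t"
    and Q_bdd: "bdd_below (Q ` {0<..<\<delta>})"
  shows "bdd_below (Y ` {0<..<\<delta>})"
proof -
  obtain C where C: "\<And>t. t \<in> {0<..<\<delta>} \<Longrightarrow> C \<le> Q t"
    using Q_bdd by (force simp: bdd_below_def)
  define t1 where "t1 = \<delta> / 2"
  have t1: "t1 \<in> {0<..<\<delta>}" using \<open>0 < \<delta>\<close> by (simp add: t1_def)
  have "min (Y t1) (Y t1 - Q t1 + C) \<le> Y t" if t: "t \<in> {0<..<\<delta>}" for t
  proof (cases "t \<le> t1")
    case True
    have "Q t - Y t \<le> Q t1 - Y t1"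
    proof (rule DERIV_nonneg_imp_nondecreasing[OF True])
      fix x assume "t \<le> x" "x \<le> t1"
      then have x: "x \<in> {0<..<\<delta>}" using t t1 by auto
      show "\<exists>y. ((\<lambda>x. Q x - Y x) has_real_derivative y) (at x) \<and> 0 \<le> y"
        using DERIV_diff[OF Q[OF x] Y[OF x]] Q'[OF x] by auto
    qed
    then show ?thesis using C[OF t] by simp
  next
    case False
    have "Y t1 \<le> Y t"
    proof (rule DERIV_nonneg_imp_nondecreasing[of t1 t Y])
      show "t1 \<le> t" using False by simp
      fix x assume "t1 \<le> x" "x \<le> t"
      then have x: "x \<in> {0<..<\<delta>}" using t t1 by auto
      show "\<exists>y. (Y has_real_derivative y) (at x) \<and> 0 \<le> y" using Y[OF x] v[OF x] by auto
    qed
    then show ?thesis by simp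
  qed
  then show ?thesis by (rule bdd_belowI2)
qed

lemma linear_bound_if_deriv_bound:
  fixes \<zeta> w :: "real \<Rightarrow> real"
  assumes K: "0 \<le> K" and B: "0 \<le> B"
    and \<zeta>_cont: "continuous_on {0..\<delta>} \<zeta>" and \<zeta>0: "\<zeta> 0 = 0"
    and \<zeta>_pos: "\<And>t. t \<in> {0<..<\<delta>} \<Longrightarrow> 0 < \<zeta> t"
    and \<zeta>_deriv: "\<And>t. t \<in> {0<..<\<delta>} \<Longrightarrow> (\<zeta> has_real_derivative w t) (at t)"
    and w: "\<And>t. t \<in> {0<..<\<delta>} \<Longrightarrow> w t \<le> K + B * t / \<zeta> t"
    and t: "t \<in> {0<..<\<delta>}"
  shows "\<zeta> t \<le> (K + B + 1) * t"
proof -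
  define C where "C = K + B + 1"
  have "(\<lambda>x. \<zeta> x - C * x) t \<le> 0"
  proof (rule nonpos_if_deriv_nonpos_where_pos[of 0 t "\<lambda>x. \<zeta> x - C * x"])
    show "continuous_on {0..t} (\<lambda>x. \<zeta> x - C * x)"
      by (intro continuous_intros continuous_on_subset[OF \<zeta>_cont]) (use t in auto)
    fix x assume x: "x \<in> {0<..<t}" and "0 < \<zeta> x - C * x"
    then have x': "x \<in> {0<..<\<delta>}" and "C * x < \<zeta> x" using t by auto
    moreover have "0 < C * x" using x' B K by (simp add: C_def)
    ultimately have "B * x / \<zeta> x \<le> B * x / (C * x)"
      using B by (intro divide_left_mono) auto
    also have "\<dots> = B / C" using x' by simp
    also have "\<dots> \<le> B / 1" using B K by (intro divide_left_mono) (auto simp: C_def)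
    finally have "w x - C \<le> 0" using w[OF x'] by (simp add: C_def)
    moreover have "((\<lambda>x. \<zeta> x - C * x) has_real_derivative w x - C) (at x)"
      using \<zeta>_deriv[OF x'] by (auto intro!: derivative_eq_intros)
    ultimately show "\<exists>y. ((\<lambda>x. \<zeta> x - C * x) has_real_derivative y) (at x) \<and> y \<le> 0" by blast
  qed (use t \<zeta>0 in auto)
  then show ?thesis by (simp add: C_def)
qed

text \<open>Integration by parts of \<open>v \<le> p' t\<^sup>-\<^sup>\<tau> / L\<close>: the function Q below
  dominates \<open>Y' = v\<close>, and it is bounded below because \<open>|p| \<le> C t\<close>.\<close>

lemma bdd_below_if_deriv_power_dominated:
  fixes p p' v Y :: "real \<Rightarrow> real"
  assumes \<delta>: "0 < \<delta>" "\<delta> \<le> 1" and \<tau>: "0 < \<tau>" "\<tau> < 1" and L: "0 < L" and C: "0 \<le> C"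
    and p_deriv: "\<And>t. t \<in> {0<..<\<delta>} \<Longrightarrow> (p has_real_derivative p' t) (at t)"
    and p_bound: "\<And>t. t \<in> {0<..<\<delta>} \<Longrightarrow> \<bar>p t\<bar> \<le> C * t"
    and v_nonneg: "\<And>t. t \<in> {0<..<\<delta>} \<Longrightarrow> 0 \<le> v t"
    and v_small: "\<And>t. t \<in> {0<..<\<delta>} \<Longrightarrow> L * t powr \<tau> * v t \<le> p' t"
    and Y: "\<And>t. t \<in> {0<..<\<delta>} \<Longrightarrow> (Y has_real_derivative v t) (at t)"
  shows "bdd_below (Y ` {0<..<\<delta>})"
proof -
  define c1 where "c1 = \<tau> * C / (L * (1 - \<tau>))"
  define Q where "Q t = p t / L * t powr (-\<tau>) + c1 * t powr (1 - \<tau>)" for t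
  define Q' where "Q' t = p' t / L * t powr (-\<tau>)
      + p t / L * (-\<tau> * t powr (-\<tau> - 1)) + c1 * ((1 - \<tau>) * t powr (1 - \<tau> - 1))" for t
  show ?thesis
  proof (rule bdd_below_if_deriv_dominated[OF \<delta>(1) Y v_nonneg])
    fix t assume t: "t \<in> {0<..<\<delta>}"
    show "(Q has_real_derivative Q' t) (at t)"
      unfolding Q_def[abs_def] Q'_def using t p_deriv[OF t] L
      by (auto intro!: derivative_eq_intros) (auto simp: field_simps)
    define P where "P = t powr (-\<tau>)"
    have P: "0 < P" "t powr \<tau> * P = 1" "t powr (-\<tau> - 1) = P / t" "t powr (1 - \<tau> - 1) = P"
      using t by (auto simp: P_def powr_minus powr_diff)
    have "v t = (L * t powr \<tau> * v t) / L * P" using L P(2) by (simp add: algebra_simps)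
    also have "\<dots> \<le> p' t / L * P"
      using v_small[OF t] L P(1) by (intro mult_right_mono divide_right_mono) auto
    finally have "v t \<le> p' t / L * P" .
    moreover have "- (\<tau> * C * P / L) \<le> p t / L * (-\<tau> * (P / t))"
    proof -
      have "p t * (\<tau> * P / (L * t)) \<le> C * t * (\<tau> * P / (L * t))"
        using p_bound[OF t] t \<tau> L P(1) by (intro mult_right_mono) (auto simp: abs_le_iff)
      also have "\<dots> = \<tau> * C * P / L" using t by simp
      finally show ?thesis by (simp add: mult.commute)
    qed
    moreover have "c1 * ((1 - \<tau>) * P) = \<tau> * C * P / L" using \<tau> L by (simp add: c1_def)
    ultimately show "v t \<le> Q' t" unfolding Q'_def P(3,4) P_def[symmetric] by linarith
  next
    have "- (C / L) \<le> Q t" if t: "t \<in> {0<..<\<delta>}" for t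
    proof -
      have "t * t powr (-\<tau>) = t powr (1 - \<tau>)" using t by (simp add: powr_diff powr_minus divide_inverse)
      moreover have "t powr (1 - \<tau>) \<le> 1" using powr_mono2[of "1 - \<tau>" t 1] t \<delta> \<tau> by simp
      ultimately have "C * (t * t powr (-\<tau>)) \<le> C" using C by (simp add: mult_left_le)
      then have "- (C / L) \<le> - (C * t / L * t powr (-\<tau>))" using L by (simp add: divide_right_mono)
      also have "\<dots> = (- (C * t)) / L * t powr (-\<tau>)" by simp
      also have "\<dots> \<le> p t / L * t powr (-\<tau>)"
        using p_bound[OF t] L by (intro mult_right_mono divide_right_mono) (auto simp: abs_le_iff)
      also have "\<dots> \<le> Q t" using C \<tau> L by (simp add: Q_def c1_def)
      finally show ?thesis .
    qed
    then show "bdd_below (Q ` {0<..<\<delta>})" by (rule bdd_belowI2)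
  qed
qed

text \<open>Used with \<open>\<zeta> = |z|\<close> and \<open>v = -D/z\<close> on one side of a zero of z at which D
  vanishes linearly: the primitive of \<open>D/z\<close> stays bounded there.\<close>

lemma primitive_bdd_below_degenerate:
  fixes \<zeta> k a v Y :: "real \<Rightarrow> real"
  assumes \<delta>: "0 < \<delta>" "\<delta> \<le> 1" and \<tau>: "0 < \<tau>" "\<tau> < 1" and L: "0 < L"
    and K: "0 \<le> K" and B: "0 \<le> B"
    and \<zeta>_cont: "continuous_on {0..\<delta>} \<zeta>" and \<zeta>0: "\<zeta> 0 = 0"
    and \<zeta>_pos: "\<And>t. t \<in> {0<..<\<delta>} \<Longrightarrow> 0 < \<zeta> t"
    and \<zeta>_deriv: "\<And>t. t \<in> {0<..<\<delta>} \<Longrightarrow> (\<zeta> has_real_derivative k t + a t * v t) (at t)"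
    and k: "\<And>t. t \<in> {0<..<\<delta>} \<Longrightarrow> \<bar>k t\<bar> \<le> K"
    and v_nonneg: "\<And>t. t \<in> {0<..<\<delta>} \<Longrightarrow> 0 \<le> v t"
    and v_small: "\<And>t. t \<in> {0<..<\<delta>} \<Longrightarrow> \<bar>a t\<bar> * v t \<le> B * t / \<zeta> t"
    and a_cont: "continuous_on {0<..<\<delta>} a"
    and a_large: "\<And>t. t \<in> {0<..<\<delta>} \<Longrightarrow> L * t powr \<tau> \<le> \<bar>a t\<bar>"
    and Y: "\<And>t. t \<in> {0<..<\<delta>} \<Longrightarrow> (Y has_real_derivative v t) (at t)"
  shows "bdd_below (Y ` {0<..<\<delta>})"
proof -
  have a_nonzero: "a t \<noteq> 0" if t: "t \<in> {0<..<\<delta>}" for t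
  proof -
    have "0 < L * t powr \<tau>" using L t by simp
    then show ?thesis using a_large[OF t] by auto
  qed
  obtain e where e: "e = 1 \<or> e = -1" and e_a: "\<And>t. t \<in> {0<..<\<delta>} \<Longrightarrow> \<bar>a t\<bar> = e * a t"
    using continuous_on_nonvanishing_sign[OF a_cont a_nonzero] by blast
  have \<zeta>_linear: "\<zeta> t \<le> (K + B + 1) * t" if "t \<in> {0<..<\<delta>}" for t
  proof (rule linear_bound_if_deriv_bound[OF K B \<zeta>_cont \<zeta>0 \<zeta>_pos \<zeta>_deriv _ that])
    fix x assume x: "x \<in> {0<..<\<delta>}"
    have "a x * v x \<le> \<bar>a x\<bar> * v x" using v_nonneg[OF x] by (simp add: mult_right_mono)
    then show "k x + a x * v x \<le> K + B * x / \<zeta> x" using k[OF x] v_small[OF x] by linarith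
  qed
  show ?thesis
  proof (rule bdd_below_if_deriv_power_dominated[OF \<delta> \<tau> L _ _ _ v_nonneg _ Y,
        where p = "\<lambda>t. e * \<zeta> t + K * t" and p' = "\<lambda>t. e * (k t + a t * v t) + K" and C = "K + B + 1 + K"])
    show "0 \<le> K + B + 1 + K" using K B by simp
    fix t assume t: "t \<in> {0<..<\<delta>}"
    show "((\<lambda>t. e * \<zeta> t + K * t) has_real_derivative e * (k t + a t * v t) + K) (at t)"
      using \<zeta>_deriv[OF t] by (auto intro!: derivative_eq_intros)
    show "\<bar>e * \<zeta> t + K * t\<bar> \<le> (K + B + 1 + K) * t"
      using \<zeta>_linear[OF t] \<zeta>_pos[OF t] e mult_nonneg_nonneg[OF K, of t] t
      by (auto simp: abs_le_iff ring_distribs)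
    have "L * t powr \<tau> * v t \<le> e * a t * v t"
      using a_large[OF t] e_a[OF t] v_nonneg[OF t] by (simp add: mult_right_mono)
    moreover have "0 \<le> e * k t + K" using k[OF t] e by (auto simp: abs_le_iff)
    ultimately show "L * t powr \<tau> * v t \<le> e * (k t + a t * v t) + K" by (simp add: algebra_simps)
  qed
qed

lemma power_lower_bound_if_deriv_large:
  fixes \<zeta> \<zeta>' :: "real \<Rightarrow> real"
  assumes \<delta>: "\<delta> \<le> 1" and \<tau>: "0 < \<tau>" "\<tau> < 1" and L: "0 < L" and K: "0 \<le> K"
    and \<zeta>_cont: "continuous_on {0..\<delta>} \<zeta>" and \<zeta>0: "\<zeta> 0 = 0"
    and \<zeta>_pos: "\<And>t. t \<in> {0<..<\<delta>} \<Longrightarrow> 0 < \<zeta> t"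
    and \<zeta>_deriv: "\<And>t. t \<in> {0<..<\<delta>} \<Longrightarrow> (\<zeta> has_real_derivative \<zeta>' t) (at t)"
    and \<zeta>'_large: "\<And>t. t \<in> {0<..<\<delta>} \<Longrightarrow> - K + L * t powr \<tau> / \<zeta> t \<le> \<zeta>' t"
  obtains m where "0 < m" "\<And>t. t \<in> {0<..<\<delta>} \<Longrightarrow> m * t powr ((1 + \<tau>) / 2) \<le> \<zeta> t"
proof -
  define \<beta> where "\<beta> = (1 + \<tau>) / 2"
  have \<beta>: "0 < \<beta>" "\<beta> < 1" "\<tau> - \<beta> = \<beta> - 1" using \<tau> by (auto simp: \<beta>_def field_simps)
  define m where "m = min 1 (L / (K + 1))"
  have m: "0 < m" "m \<le> 1" "K + 1 \<le> L / m"
  proof -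
    show "0 < m" "m \<le> 1" using L K by (auto simp: m_def)
    show "K + 1 \<le> L / m"
    proof (cases "1 \<le> L / (K + 1)")
      case True
      then show ?thesis using K by (simp add: m_def field_simps)
    next
      case False
      then show ?thesis using L K by (simp add: m_def)
    qed
  qed
  txt \<open>Below the barrier \<open>m t\<^sup>\<beta>\<close> the forcing \<open>L t\<^sup>\<tau> / \<zeta>\<close> exceeds its slope.\<close>
  have "(\<lambda>x. m * x powr \<beta> - \<zeta> x) t \<le> 0" if t: "t \<in> {0<..<\<delta>}" for t
  proof (rule nonpos_if_deriv_nonpos_where_pos[of 0 t "\<lambda>x. m * x powr \<beta> - \<zeta> x"])
    show "continuous_on {0..t} (\<lambda>x. m * x powr \<beta> - \<zeta> x)"
      by (intro continuous_intros continuous_on_subset[OF \<zeta>_cont] continuous_on_powr')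
        (use t \<beta> in auto)
    fix x assume x: "x \<in> {0<..<t}" and "0 < m * x powr \<beta> - \<zeta> x"
    then have x': "x \<in> {0<..<\<delta>}" and below: "\<zeta> x < m * x powr \<beta>" using t by auto
    have "L / m * x powr (\<beta> - 1) = L * x powr \<tau> / (m * x powr \<beta>)"
      using x' m by (simp add: \<beta>(3)[symmetric] powr_diff field_simps)
    also have "\<dots> \<le> L * x powr \<tau> / \<zeta> x"
      using below \<zeta>_pos[OF x'] L x' m by (intro divide_left_mono mult_pos_pos) auto
    finally have \<zeta>'_x: "- K + L / m * x powr (\<beta> - 1) \<le> \<zeta>' x" using \<zeta>'_large[OF x'] by linarith
    have "x powr (1 - \<beta>) \<le> 1" using powr_mono2[of "1 - \<beta>" x 1] x' \<delta> \<beta> by simp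
    moreover have "x powr (\<beta> - 1) = inverse (x powr (1 - \<beta>))" by (simp add: powr_minus[symmetric])
    ultimately have pow_ge1: "1 \<le> x powr (\<beta> - 1)" using x' by (simp add: one_le_inverse)
    have "m * \<beta> - L / m \<le> - K" using m \<beta> mult_le_one[of m \<beta>] by linarith
    then have "(m * \<beta> - L / m) * x powr (\<beta> - 1) \<le> - K * x powr (\<beta> - 1)"
      by (rule mult_right_mono) simp
    also have "\<dots> \<le> - K" using mult_left_mono[OF pow_ge1 K] by simp
    finally have "m * (\<beta> * x powr (\<beta> - 1)) - \<zeta>' x \<le> 0" using \<zeta>'_x by (simp add: algebra_simps)
    moreover have "((\<lambda>x. m * x powr \<beta> - \<zeta> x) has_real_derivative
        m * (\<beta> * x powr (\<beta> - 1)) - \<zeta>' x) (at x)"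
      using x' \<zeta>_deriv[OF x'] by (auto intro!: derivative_eq_intros)
    ultimately show "\<exists>y. ((\<lambda>x. m * x powr \<beta> - \<zeta> x) has_real_derivative y) (at x) \<and> y \<le> 0"
      by blast
  qed (use t \<zeta>0 in auto)
  then show ?thesis using that m(1) by (simp add: \<beta>_def)
qed

text \<open>Used with \<open>\<zeta> = z\<close> and \<open>v = -D/z\<close> near a zero of z at which D does not vanish:
  then \<open>\<zeta>\<close> grows like \<open>t\<^sup>\<beta>\<close> with \<open>\<beta> < 1\<close>, so \<open>v\<close> is integrable.\<close>

lemma primitive_bdd_below_nondegenerate:
  fixes \<zeta> \<zeta>' v Y :: "real \<Rightarrow> real"
  assumes \<delta>: "0 < \<delta>" "\<delta> \<le> 1" and \<tau>: "0 < \<tau>" "\<tau> < 1" and L: "0 < L"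
    and K: "0 \<le> K" and M: "0 \<le> M"
    and \<zeta>_cont: "continuous_on {0..\<delta>} \<zeta>" and \<zeta>0: "\<zeta> 0 = 0"
    and \<zeta>_pos: "\<And>t. t \<in> {0<..<\<delta>} \<Longrightarrow> 0 < \<zeta> t"
    and \<zeta>_deriv: "\<And>t. t \<in> {0<..<\<delta>} \<Longrightarrow> (\<zeta> has_real_derivative \<zeta>' t) (at t)"
    and \<zeta>'_large: "\<And>t. t \<in> {0<..<\<delta>} \<Longrightarrow> - K + L * t powr \<tau> / \<zeta> t \<le> \<zeta>' t"
    and v_nonneg: "\<And>t. t \<in> {0<..<\<delta>} \<Longrightarrow> 0 \<le> v t"
    and v_small: "\<And>t. t \<in> {0<..<\<delta>} \<Longrightarrow> v t \<le> M / \<zeta> t"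
    and Y: "\<And>t. t \<in> {0<..<\<delta>} \<Longrightarrow> (Y has_real_derivative v t) (at t)"
  shows "bdd_below (Y ` {0<..<\<delta>})"
proof -
  define \<beta> where "\<beta> = (1 + \<tau>) / 2"
  have \<beta>: "0 < \<beta>" "\<beta> < 1" using \<tau> by (auto simp: \<beta>_def)
  obtain m where m: "0 < m" and \<zeta>_large: "\<And>t. t \<in> {0<..<\<delta>} \<Longrightarrow> m * t powr \<beta> \<le> \<zeta> t"
    using power_lower_bound_if_deriv_large[OF \<delta>(2) \<tau> L K \<zeta>_cont \<zeta>0 \<zeta>_pos \<zeta>_deriv \<zeta>'_large]
    unfolding \<beta>_def by blast
  define Q where "Q t = M / m * t powr (1 - \<beta>) / (1 - \<beta>)" for t
  show ?thesis
  proof (rule bdd_below_if_deriv_dominated[OF \<delta>(1) Y v_nonneg, of Q "\<lambda>t. M / m * t powr (- \<beta>)"])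
    fix t assume t: "t \<in> {0<..<\<delta>}"
    have "((\<lambda>t. t powr (1 - \<beta>)) has_real_derivative (1 - \<beta>) * t powr (1 - \<beta> - 1)) (at t)"
      using t by (intro has_real_derivative_powr) auto
    then have "(Q has_real_derivative M / m * ((1 - \<beta>) * t powr (1 - \<beta> - 1)) / (1 - \<beta>)) (at t)"
      unfolding Q_def[abs_def] by (intro DERIV_cdivide DERIV_cmult)
    then show "(Q has_real_derivative M / m * t powr (- \<beta>)) (at t)" using \<beta> by simp
    have "v t \<le> M / \<zeta> t" by (rule v_small[OF t])
    also have "\<dots> \<le> M / (m * t powr \<beta>)"
      using \<zeta>_large[OF t] \<zeta>_pos[OF t] M m t by (intro divide_left_mono) auto
    also have "\<dots> = M / m * t powr (- \<beta>)" by (simp add: powr_minus field_simps)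
    finally show "v t \<le> M / m * t powr (- \<beta>)" .
  next
    show "bdd_below (Q ` {0<..<\<delta>})" using M m \<beta> by (intro bdd_belowI2[where m = 0]) (simp add: Q_def)
  qed
qed

section \<open>Decreasing primitives\<close>

definition decreasing_primitive :: "real \<Rightarrow> real \<Rightarrow> real set \<Rightarrow> (real \<Rightarrow> real) \<Rightarrow> (real \<Rightarrow> real) \<Rightarrow> bool"
  where "decreasing_primitive a b E r X \<longleftrightarrow> finite E \<and> continuous_on {a<..<b} X
     \<and> strict_antimono_on {a<..<b} X \<and> (\<forall>u\<in>{a<..<b} - E. (X has_real_derivative r u) (at u))"

lemma decreasing_primitiveD:
  assumes "decreasing_primitive a b E r X"
  shows "finite E" "\<And>x. x \<in> {a<..<b} \<Longrightarrow> isCont X x"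
    "\<And>x y. x \<in> {a<..<b} \<Longrightarrow> y \<in> {a<..<b} \<Longrightarrow> x < y \<Longrightarrow> X y < X x"
    "\<And>u. u \<in> {a<..<b} - E \<Longrightarrow> (X has_real_derivative r u) (at u)"
  using assms
  by (auto simp: decreasing_primitive_def continuous_on_eq_continuous_at monotone_on_def)

lemma decreasing_primitive_exists:
  fixes r :: "real \<Rightarrow> real"
  assumes "a < b" and cont: "\<And>x. x \<in> {a<..<b} \<Longrightarrow> isCont r x"
    and neg: "\<And>x. x \<in> {a<..<b} \<Longrightarrow> r x < 0"
  obtains X where "decreasing_primitive a b {} r X"
proof -
  obtain X where "\<And>x. a < x \<Longrightarrow> x < b \<Longrightarrow> (X has_vector_derivative r x) (at x)"
    using einterval_antiderivative[of "ereal a" "ereal b" r] assms by auto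
  then have X: "\<And>x. x \<in> {a<..<b} \<Longrightarrow> (X has_real_derivative r x) (at x)"
    by (simp add: has_real_derivative_iff_has_vector_derivative)
  have "continuous_on {a<..<b} X"
    unfolding continuous_on_eq_continuous_at[OF open_greaterThanLessThan] using X DERIV_isCont by blast
  moreover have "strict_antimono_on {a<..<b} X"
  proof (rule monotone_onI)
    fix x y assume "x \<in> {a<..<b}" "y \<in> {a<..<b}" "x < y"
    then show "X y < X x" by (intro DERIV_neg_imp_decreasing[of x y X]) (use X neg in force)+
  qed
  ultimately have "decreasing_primitive a b {} r X" using X by (simp add: decreasing_primitive_def)
  then show ?thesis by (rule that)
qed

lemma isCont_junction:
  fixes F Fl Fr :: "real \<Rightarrow> real"
  assumes F: "F m = 0" "\<And>u. u < m \<Longrightarrow> F u = Fl u" "\<And>u. m < u \<Longrightarrow> F u = Fr u"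
    and dec1: "\<And>x y. x \<in> {a<..<m} \<Longrightarrow> y \<in> {a<..<m} \<Longrightarrow> x < y \<Longrightarrow> Fl y < Fl x"
    and dec2: "\<And>x y. x \<in> {m<..<b} \<Longrightarrow> y \<in> {m<..<b} \<Longrightarrow> x < y \<Longrightarrow> Fr y < Fr x"
    and inf1: "\<And>u. u \<in> {a<..<m} \<Longrightarrow> 0 < Fl u" "\<And>e. 0 < e \<Longrightarrow> \<exists>u\<in>{a<..<m}. Fl u < e"
    and sup2: "\<And>u. u \<in> {m<..<b} \<Longrightarrow> Fr u < 0" "\<And>e. 0 < e \<Longrightarrow> \<exists>u\<in>{m<..<b}. - e < Fr u"
  shows "isCont F m"
  unfolding continuous_at_eps_delta
proof (intro allI impI)
  fix e :: real assume e: "e > 0"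
  obtain u1 where u1: "u1 \<in> {a<..<m}" "Fl u1 < e" using inf1(2)[OF e] by blast
  obtain u2 where u2: "u2 \<in> {m<..<b}" "- e < Fr u2" using sup2(2)[OF e] by blast
  have "dist (F y) (F m) < e" if "dist y m < min (m - u1) (u2 - m)" for y
  proof -
    have y: "u1 < y" "y < u2" using that by (auto simp: dist_real_def)
    consider "y < m" | "y = m" | "y > m" by linarith
    then show ?thesis
    proof cases
      case 1
      then show ?thesis using dec1[of u1 y] inf1(1)[of y] u1 y F by (auto simp: dist_real_def)
    next
      case 3
      then show ?thesis using dec2[of y u2] sup2(1)[of y] u2 y F by (auto simp: dist_real_def)
    qed (use e in simp)
  qed
  moreover have "0 < min (m - u1) (u2 - m)" using u1 u2 by auto
  ultimately show "\<exists>d>0. \<forall>y. dist y m < d \<longrightarrow> dist (F y) (F m) < e" by blast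
qed

text \<open>The vertical shifts make the glued function vanish at m; continuity there needs
  both primitives to stay bounded as they approach m.\<close>

lemma decreasing_primitive_glue:
  fixes X1 X2 r :: "real \<Rightarrow> real"
  assumes "a < m" "m < b"
    and X1: "decreasing_primitive a m E1 r X1" and X2: "decreasing_primitive m b E2 r X2"
    and \<delta>: "0 < \<delta>1" "\<delta>1 \<le> m - a" "0 < \<delta>2" "\<delta>2 \<le> b - m"
    and bdd1: "bdd_below ((\<lambda>t. X1 (m - t)) ` {0<..<\<delta>1})"
    and bdd2: "bdd_above ((\<lambda>t. X2 (m + t)) ` {0<..<\<delta>2})"
  obtains X where "decreasing_primitive a b (insert m (E1 \<union> E2)) r X"
proof -
  define l1 where "l1 = Inf ((\<lambda>t. X1 (m - t)) ` {0<..<\<delta>1})"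
  define l2 where "l2 = Sup ((\<lambda>t. X2 (m + t)) ` {0<..<\<delta>2})"
  define X where "X u = (if u < m then X1 u - l1 else if u = m then 0 else X2 u - l2)" for u
  note dec1 = decreasing_primitiveD(3)[OF X1] and dec2 = decreasing_primitiveD(3)[OF X2]
  have ne1: "(\<lambda>t. X1 (m - t)) ` {0<..<\<delta>1} \<noteq> {}" and ne2: "(\<lambda>t. X2 (m + t)) ` {0<..<\<delta>2} \<noteq> {}"
    using \<delta> by auto
  have above_l1: "l1 < X1 u" if u: "u \<in> {a<..<m}" for u
  proof -
    define t where "t = min (m - u) \<delta>1 / 2"
    have t: "t \<in> {0<..<\<delta>1}" "u < m - t" using u \<delta> by (auto simp: t_def min_def field_simps)
    have "l1 \<le> X1 (m - t)" unfolding l1_def using bdd1 t by (intro cInf_lower) auto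
    also have "\<dots> < X1 u" using dec1[of u "m - t"] u t \<delta> by auto
    finally show ?thesis .
  qed
  have below_l2: "X2 u < l2" if u: "u \<in> {m<..<b}" for u
  proof -
    define t where "t = min (u - m) \<delta>2 / 2"
    have t: "t \<in> {0<..<\<delta>2}" "m + t < u" using u \<delta> by (auto simp: t_def min_def field_simps)
    have "X2 u < X2 (m + t)" using dec2[of "m + t" u] u t \<delta> by auto
    also have "\<dots> \<le> l2" unfolding l2_def using bdd2 t by (intro cSup_upper) auto
    finally show ?thesis .
  qed
  have "isCont X x" if x: "x \<in> {a<..<b}" for x
  proof -
    consider "x < m" | "x = m" | "x > m" by linarith
    then show ?thesis
    proof cases
      case 1
      have "isCont (\<lambda>u. X1 u - l1) x"
        using decreasing_primitiveD(2)[OF X1, of x] x 1 by (auto intro!: continuous_intros)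
      moreover have "eventually (\<lambda>u. X1 u - l1 = X u) (nhds x)"
        unfolding eventually_nhds using x 1 by (intro exI[of _ "{a<..<m}"]) (auto simp: X_def)
      ultimately show ?thesis using isCont_cong by metis
    next
      case 3
      have "isCont (\<lambda>u. X2 u - l2) x"
        using decreasing_primitiveD(2)[OF X2, of x] x 3 by (auto intro!: continuous_intros)
      moreover have "eventually (\<lambda>u. X2 u - l2 = X u) (nhds x)"
        unfolding eventually_nhds using x 3 by (intro exI[of _ "{m<..<b}"]) (auto simp: X_def)
      ultimately show ?thesis using isCont_cong by metis
    next
      case 2
      show ?thesis unfolding 2
      proof (rule isCont_junction[where Fl = "\<lambda>u. X1 u - l1" and Fr = "\<lambda>u. X2 u - l2" and a = a and b = b])
        fix e :: real assume e: "0 < e"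
        obtain t1 where "t1 \<in> {0<..<\<delta>1}" "X1 (m - t1) < l1 + e"
          using cInf_less_iff[OF ne1 bdd1, of "l1 + e"] e unfolding l1_def by auto
        then show "\<exists>u\<in>{a<..<m}. X1 u - l1 < e" using \<delta> by (intro bexI[of _ "m - t1"]) auto
        obtain t2 where "t2 \<in> {0<..<\<delta>2}" "l2 - e < X2 (m + t2)"
          using less_cSup_iff[OF ne2 bdd2, of "l2 - e"] e unfolding l2_def by auto
        then show "\<exists>u\<in>{m<..<b}. - e < X2 u - l2" using \<delta> by (intro bexI[of _ "m + t2"]) auto
      qed (use dec1 dec2 above_l1 below_l2 in \<open>auto simp: X_def\<close>)
    qed
  qed
  then have "continuous_on {a<..<b} X" by (simp add: continuous_on_eq_continuous_at)
  moreover have "strict_antimono_on {a<..<b} X"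
  proof (rule monotone_onI)
    fix x y assume xy: "x \<in> {a<..<b}" "y \<in> {a<..<b}" "x < y"
    consider "y < m" | "x < m" "y = m" | "x < m" "m < y" | "x = m" "m < y" | "m < x"
      using xy(3) by linarith
    then show "X y < X x"
      by cases (use dec1[of x y] dec2[of x y] above_l1[of x] below_l2[of y] xy in \<open>auto simp: X_def\<close>)
  qed
  moreover have "(X has_real_derivative r u) (at u)" if u: "u \<in> {a<..<b} - insert m (E1 \<union> E2)" for u
  proof (cases "u < m")
    case True
    have "((\<lambda>v. X1 v - l1) has_real_derivative r u) (at u)"
      using decreasing_primitiveD(4)[OF X1, of u] u True by (auto intro!: derivative_eq_intros)
    then show ?thesis
      by (rule has_field_derivative_transform_within_open[of _ _ _ "{a<..<m}"])
        (use u True in \<open>auto simp: X_def\<close>)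
  next
    case False
    then have "m < u" using u by auto
    have "((\<lambda>v. X2 v - l2) has_real_derivative r u) (at u)"
      using decreasing_primitiveD(4)[OF X2, of u] u \<open>m < u\<close> by (auto intro!: derivative_eq_intros)
    then show ?thesis
      by (rule has_field_derivative_transform_within_open[of _ _ _ "{m<..<b}"])
        (use u \<open>m < u\<close> in \<open>auto simp: X_def\<close>)
  qed
  moreover have "finite (insert m (E1 \<union> E2))"
    using decreasing_primitiveD(1)[OF X1] decreasing_primitiveD(1)[OF X2] by simp
  ultimately have "decreasing_primitive a b (insert m (E1 \<union> E2)) r X"
    by (simp add: decreasing_primitive_def)
  then show ?thesis by (rule that)
qed

section \<open>The profile as a generalized inverse\<close>

text \<open>For X strictly decreasing on (0,1), \<open>profile_of X\<close> inverts X on its range and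
  is 1 to the left and 0 to the right of it.\<close>

definition profile_of :: "(real \<Rightarrow> real) \<Rightarrow> real \<Rightarrow> real"
  where "profile_of X \<xi> = Sup (insert 0 {u\<in>{0<..<1}. \<xi> < X u})"

lemma finite_if_subsingleton: "(\<And>x y. x \<in> S \<Longrightarrow> y \<in> S \<Longrightarrow> x = y) \<Longrightarrow> finite S"
  by (metis finite.simps insertI1 subsetI finite_subset)

context
  fixes X r :: "real \<Rightarrow> real" and E :: "real set"
  assumes X: "decreasing_primitive 0 1 E r X"
begin

private lemmas X_decreasing = decreasing_primitiveD(3)[OF X] and X_cont = decreasing_primitiveD(2)[OF X]

private lemma X_less_iff: "x \<in> {0<..<1} \<Longrightarrow> y \<in> {0<..<1} \<Longrightarrow> X y < X x \<longleftrightarrow> x < y"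
  using X_decreasing[of x y] X_decreasing[of y x] by (cases x y rule: linorder_cases) auto

private lemma level_set_bdd: "bdd_above (insert 0 {u\<in>{0<..<1}. \<xi> < X u})"
  by (rule bdd_aboveI[of _ 1]) auto

lemma profile_of_bounds: "0 \<le> profile_of X \<xi>" "profile_of X \<xi> \<le> 1"
proof -
  show "0 \<le> profile_of X \<xi>" unfolding profile_of_def by (rule cSup_upper[OF _ level_set_bdd]) auto
  show "profile_of X \<xi> \<le> 1" unfolding profile_of_def by (rule cSup_least) auto
qed

lemma profile_of_antimono: "\<xi>1 \<le> \<xi>2 \<Longrightarrow> profile_of X \<xi>2 \<le> profile_of X \<xi>1"
  unfolding profile_of_def by (rule cSup_subset_mono[OF _ level_set_bdd]) auto

lemma profile_of_inverse: assumes u: "u \<in> {0<..<1}" shows "profile_of X (X u) = u"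
proof -
  have "insert 0 {v\<in>{0<..<1}. X u < X v} = {0..<u}"
    using u X_less_iff[of v u for v] by (auto simp: X_less_iff)
  then show ?thesis using u by (simp add: profile_of_def)
qed

lemma inverse_profile_of: assumes p: "0 < profile_of X \<xi>" "profile_of X \<xi> < 1" shows "X (profile_of X \<xi>) = \<xi>"
proof -
  define u where "u = profile_of X \<xi>"
  have u: "u \<in> {0<..<1}" using p by (auto simp: u_def)
  have cu: "isCont X u" using X_cont[OF u] .
  consider "\<xi> < X u" | "\<xi> > X u" | "\<xi> = X u" by linarith
  then show ?thesis
  proof cases
    case 1
    obtain d where d: "d > 0" "\<And>v. dist v u < d \<Longrightarrow> dist (X v) (X u) < X u - \<xi>"
      using cu[unfolded continuous_at_eps_delta] 1 by (meson diff_gt_0_iff_gt)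
    define v where "v = min (u + d/2) ((u+1)/2)"
    have v: "v \<in> {0<..<1}" "u < v" "dist v u < d" using u d by (auto simp: v_def dist_real_def min_def)
    have "\<xi> < X v" using d(2)[OF v(3)] by (simp add: dist_real_def)
    then have "v \<le> u" unfolding u_def profile_of_def using v by (intro cSup_upper[OF _ level_set_bdd]) auto
    then show ?thesis using v by simp
  next
    case 2
    obtain d where d: "d > 0" "\<And>v. dist v u < d \<Longrightarrow> dist (X v) (X u) < \<xi> - X u"
      using cu[unfolded continuous_at_eps_delta] 2 by (meson diff_gt_0_iff_gt)
    have "w \<le> max 0 (u - d)" if w: "w \<in> {0<..<1}" "\<xi> < X w" for w
    proof -
      have "w < u" using X_less_iff[OF w(1) u] w(2) 2 by simp
      moreover have "\<not> dist w u < d" using d(2)[of w] w(2) by (auto simp: dist_real_def)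
      ultimately show ?thesis by (simp add: dist_real_def)
    qed
    then have "u \<le> max 0 (u - d)" unfolding u_def profile_of_def by (intro cSup_least) auto
    then show ?thesis using u d by auto
  qed (simp add: u_def)
qed

lemma profile_of_at_bot: "(profile_of X \<longlongrightarrow> 1) at_bot"
proof (rule tendstoI)
  fix e :: real assume e: "e > 0"
  define u where "u = max (1/2) (1 - e/2)"
  have u: "u \<in> {0<..<1}" using e by (auto simp: u_def)
  have "\<forall>\<xi>\<le>X u. dist (profile_of X \<xi>) 1 < e"
  proof (intro allI impI)
    fix \<xi> assume "\<xi> \<le> X u"
    then have "u \<le> profile_of X \<xi>" using profile_of_antimono[of \<xi> "X u"] profile_of_inverse[OF u] by simp
    then show "dist (profile_of X \<xi>) 1 < e" using profile_of_bounds[of \<xi>] e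
      by (auto simp: dist_real_def u_def)
  qed
  then show "eventually (\<lambda>\<xi>. dist (profile_of X \<xi>) 1 < e) at_bot"
    unfolding eventually_at_bot_linorder by blast
qed

lemma profile_of_at_top: "(profile_of X \<longlongrightarrow> 0) at_top"
proof (rule tendstoI)
  fix e :: real assume e: "e > 0"
  define u where "u = min (1/2) (e/2)"
  have u: "u \<in> {0<..<1}" using e by (auto simp: u_def)
  have "\<forall>\<xi>\<ge>X u. dist (profile_of X \<xi>) 0 < e"
  proof (intro allI impI)
    fix \<xi> assume "\<xi> \<ge> X u"
    then have "profile_of X \<xi> \<le> u" using profile_of_antimono[of "X u" \<xi>] profile_of_inverse[OF u] by simp
    then show "dist (profile_of X \<xi>) 0 < e" using profile_of_bounds[of \<xi>] e
      by (auto simp: dist_real_def u_def)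
  qed
  then show "eventually (\<lambda>\<xi>. dist (profile_of X \<xi>) 0 < e) at_top"
    unfolding eventually_at_top_linorder by blast
qed

lemma isCont_profile_of: "isCont (profile_of X) \<xi>"
  unfolding continuous_at_eps_delta
proof (intro allI impI)
  fix e :: real assume e: "e > 0"
  define u0 where "u0 = profile_of X \<xi>"
  have u0_range: "0 \<le> u0" "u0 \<le> 1" using profile_of_bounds by (auto simp: u0_def)
  obtain \<xi>1 where \<xi>1: "\<xi>1 < \<xi>" "\<And>y. \<xi>1 < y \<Longrightarrow> profile_of X y < u0 + e"
  proof (cases "u0 + e/2 < 1")
    case True
    define v where "v = u0 + e/2"
    have v: "v \<in> {0<..<1}" using True u0_range e by (auto simp: v_def)
    have pv: "profile_of X (X v) = v" using profile_of_inverse[OF v] .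
    have "X v < \<xi>"
    proof (rule ccontr)
      assume "\<not> X v < \<xi>"
      then have "profile_of X (X v) \<le> u0" using profile_of_antimono[of \<xi> "X v"] by (simp add: u0_def)
      then show False using pv e by (simp add: v_def)
    qed
    moreover have "profile_of X y < u0 + e" if "X v < y" for y
      using profile_of_antimono[of "X v" y] that pv e by (simp add: v_def)
    ultimately show ?thesis using that by blast
  next
    case False
    have "profile_of X y < u0 + e" for y using profile_of_bounds[of y] False e by simp
    then show ?thesis using that[of "\<xi> - 1"] by simp
  qed
  obtain \<xi>2 where \<xi>2: "\<xi> < \<xi>2" "\<And>y. y < \<xi>2 \<Longrightarrow> profile_of X y > u0 - e"
  proof (cases "u0 - e/2 > 0")
    case True
    define v where "v = u0 - e/2"
    have v: "v \<in> {0<..<1}" using True u0_range e by (auto simp: v_def)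
    have pv: "profile_of X (X v) = v" using profile_of_inverse[OF v] .
    have "\<xi> < X v"
    proof (rule ccontr)
      assume "\<not> \<xi> < X v"
      then have "u0 \<le> profile_of X (X v)" using profile_of_antimono[of "X v" \<xi>] by (simp add: u0_def)
      then show False using pv e by (simp add: v_def)
    qed
    moreover have "profile_of X y > u0 - e" if "y < X v" for y
      using profile_of_antimono[of y "X v"] that pv e by (simp add: v_def)
    ultimately show ?thesis using that by blast
  next
    case False
    have "profile_of X y > u0 - e" for y using profile_of_bounds[of y] False e by simp
    then show ?thesis using that[of "\<xi> + 1"] by simp
  qed
  define d where "d = min (\<xi> - \<xi>1) (\<xi>2 - \<xi>)"
  have "d > 0" using \<xi>1 \<xi>2 by (simp add: d_def)
  moreover have "dist (profile_of X y) (profile_of X \<xi>) < e" if "dist y \<xi> < d" for y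
  proof -
    have "\<xi>1 < y" "y < \<xi>2" using that by (auto simp: d_def dist_real_def)
    then show ?thesis using \<xi>1(2)[of y] \<xi>2(2)[of y] by (simp add: dist_real_def u0_def abs_less_iff)
  qed
  ultimately show "\<exists>d>0. \<forall>y. dist y \<xi> < d \<longrightarrow> dist (profile_of X y) (profile_of X \<xi>) < e" by blast
qed

lemma profile_of_has_derivative:
  assumes p: "profile_of X \<xi> \<in> {0<..<1} - E" and nz: "r (profile_of X \<xi>) \<noteq> 0"
  shows "(profile_of X has_real_derivative inverse (r (profile_of X \<xi>))) (at \<xi>)"
proof -
  define u where "u = profile_of X \<xi>"
  have u: "0 < u" "u < 1" using p by (auto simp: u_def)
  obtain d where d: "d > 0" "\<And>y. dist y \<xi> < d \<Longrightarrow> dist (profile_of X y) u < min u (1 - u)"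
    using isCont_profile_of[of \<xi>, unfolded continuous_at_eps_delta] u unfolding u_def
    by (metis diff_gt_0_iff_gt min_less_iff_conj)
  show ?thesis
  proof (rule DERIV_inverse_function[where f = X and a = "\<xi> - d" and b = "\<xi> + d"])
    show "(X has_real_derivative r (profile_of X \<xi>)) (at (profile_of X \<xi>))"
      using decreasing_primitiveD(4)[OF X] p by blast
    show "r (profile_of X \<xi>) \<noteq> 0" by (rule nz)
    show "\<xi> - d < \<xi>" "\<xi> < \<xi> + d" using d by auto
    show "isCont (profile_of X) \<xi>" by (rule isCont_profile_of)
    fix y assume y: "\<xi> - d < y" "y < \<xi> + d"
    then have "dist (profile_of X y) u < min u (1 - u)" using d(2)[of y] by (simp add: dist_real_def)
    then have "0 < profile_of X y" "profile_of X y < 1" by (auto simp: dist_real_def)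
    then show "X (profile_of X y) = y" by (rule inverse_profile_of)
  qed
qed

lemma profile_of_eventually_0:
  assumes "profile_of X \<xi>' = 0" "\<xi>' < \<xi>"
  shows "\<forall>\<^sub>F y in nhds \<xi>. profile_of X y = 0"
  unfolding eventually_nhds
proof (intro exI conjI ballI)
  fix y assume "y \<in> {\<xi>'<..}"
  then show "profile_of X y = 0"
    using assms(1) profile_of_antimono[of \<xi>' y] profile_of_bounds(1)[of y] by simp
qed (use assms in auto)

lemma profile_of_eventually_1:
  assumes "profile_of X \<xi>' = 1" "\<xi> < \<xi>'"
  shows "\<forall>\<^sub>F y in nhds \<xi>. profile_of X y = 1"
  unfolding eventually_nhds
proof (intro exI conjI ballI)
  fix y assume "y \<in> {..<\<xi>'}"
  then show "profile_of X y = 1"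
    using assms(1) profile_of_antimono[of y \<xi>'] profile_of_bounds(2)[of y] by simp
qed (use assms in auto)

lemma finite_profile_of_not_locally_constant:
  "finite {\<xi>. profile_of X \<xi> \<in> {0, 1} \<and> \<not> (\<forall>\<^sub>F y in nhds \<xi>. profile_of X y = profile_of X \<xi>)}"
    (is "finite ?N")
proof -
  define N0 where "N0 = {\<xi>. profile_of X \<xi> = 0 \<and> \<not> (\<forall>\<^sub>F y in nhds \<xi>. profile_of X y = 0)}"
  define N1 where "N1 = {\<xi>. profile_of X \<xi> = 1 \<and> \<not> (\<forall>\<^sub>F y in nhds \<xi>. profile_of X y = 1)}"
  have "x = y" if "x \<in> N0" "y \<in> N0" for x y
    using that profile_of_eventually_0[of x y] profile_of_eventually_0[of y x]
    by (cases x y rule: linorder_cases) (auto simp: N0_def)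
  then have "finite N0" by (rule finite_if_subsingleton)
  moreover have "x = y" if "x \<in> N1" "y \<in> N1" for x y
    using that profile_of_eventually_1[of x y] profile_of_eventually_1[of y x]
    by (cases x y rule: linorder_cases) (auto simp: N1_def)
  then have "finite N1" by (rule finite_if_subsingleton)
  moreover have "?N \<subseteq> N0 \<union> N1" by (auto simp: N0_def N1_def)
  ultimately show ?thesis by (meson finite_UnI finite_subset)
qed

end

section \<open>Weak formulation\<close>

lemma test_funD:
  assumes "test_fun \<psi>"
  shows "(\<psi> has_real_derivative deriv \<psi> x) (at x)" "isCont \<psi> x" "isCont (deriv \<psi>) x"
    and "\<exists>R>0. \<forall>x. R \<le> \<bar>x\<bar> \<longrightarrow> \<psi> x = 0 \<and> deriv \<psi> x = 0"
proof -
  have d0: "\<psi> differentiable (at x)" and d1: "deriv \<psi> differentiable (at x)" for x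
    using assms[unfolded test_fun_def] by (metis funpow_0, metis funpow_0 funpow_Suc_right o_apply One_nat_def)
  show "(\<psi> has_real_derivative deriv \<psi> x) (at x)" using d0 by (simp add: DERIV_deriv_iff_real_differentiable)
  show "isCont \<psi> x" "isCont (deriv \<psi>) x" using d0 d1 by (simp_all add: differentiable_imp_continuous_within)
  obtain R0 where R0: "\<And>x. R0 < \<bar>x\<bar> \<Longrightarrow> \<psi> x = 0" using assms unfolding test_fun_def by blast
  have "deriv \<psi> x = 0" if x: "R0 < \<bar>x\<bar>" for x
  proof -
    have "\<forall>\<^sub>F y in nhds x. \<psi> y = 0"
      unfolding eventually_nhds using x R0
      by (intro exI[of _ "{y. R0 < \<bar>y\<bar>}"]) (auto intro!: open_Collect_less continuous_intros)
    then have "(\<psi> has_real_derivative 0) (at x)" using DERIV_cong_ev[of x x "\<lambda>_. 0" \<psi> 0 0] by simp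
    then show ?thesis by (rule DERIV_imp_deriv)
  qed
  then show "\<exists>R>0. \<forall>x. R \<le> \<bar>x\<bar> \<longrightarrow> \<psi> x = 0 \<and> deriv \<psi> x = 0"
    using R0 by (intro exI[of _ "\<bar>R0\<bar> + 1"]) auto
qed

lemma integral_by_parts_test_fun:
  fixes w w' \<psi> :: "real \<Rightarrow> real"
  assumes \<psi>: "test_fun \<psi>" and "finite N"
    and w: "continuous_on UNIV w" and w': "continuous_on UNIV w'"
    and w_deriv: "\<And>x. x \<notin> N \<Longrightarrow> (w has_real_derivative w' x) (at x)"
  defines "G \<equiv> \<lambda>x. w x * deriv \<psi> x + w' x * \<psi> x"
  shows "integrable lebesgue G" "(\<integral>x. G x \<partial>lebesgue) = 0"
proof -
  obtain R where R: "0 < R" "\<And>x. R \<le> \<bar>x\<bar> \<Longrightarrow> \<psi> x = 0 \<and> deriv \<psi> x = 0"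
    using test_funD(4)[OF \<psi>] by blast
  have G_cont: "continuous_on UNIV G"
    unfolding G_def using test_funD(2,3)[OF \<psi>]
    by (intro continuous_intros w w') (auto simp: continuous_on_eq_continuous_at)
  have G_outside: "(\<lambda>x. indicator {-R..R} x *\<^sub>R G x) = G"
  proof
    fix x show "indicator {-R..R} x *\<^sub>R G x = G x"
      using R(2)[of x] by (cases "x \<in> {-R..R}") (auto simp: G_def)
  qed
  have "(G has_integral (w R * \<psi> R - w (-R) * \<psi> (-R))) {-R..R}"
  proof (rule fundamental_theorem_of_calculus_interior_strong[OF \<open>finite N\<close>])
    show "-R \<le> R" using R by simp
    show "continuous_on {-R..R} (\<lambda>x. w x * \<psi> x)"
      using test_funD(2)[OF \<psi>]
      by (intro continuous_intros continuous_on_subset[OF w] continuous_at_imp_continuous_on) auto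
    fix x assume "x \<in> {-R<..<R} - N"
    then have "((\<lambda>x. w x * \<psi> x) has_real_derivative G x) (at x)"
      using DERIV_mult[OF w_deriv test_funD(1)[OF \<psi>]] by (simp add: G_def algebra_simps)
    then show "((\<lambda>x. w x * \<psi> x) has_vector_derivative G x) (at x)"
      by (simp add: has_real_derivative_iff_has_vector_derivative)
  qed
  then have G_int: "(G has_integral 0) {-R..R}" using R by simp
  have G_abs: "G absolutely_integrable_on {-R..R}"
    by (rule absolutely_integrable_continuous_real, rule continuous_on_subset[OF G_cont]) auto
  then show "integrable lebesgue G" unfolding set_integrable_def G_outside .
  have "(\<integral>x. G x \<partial>lebesgue) = integral {-R..R} G"
    using set_lebesgue_integral_eq_integral(2)[OF G_abs] unfolding set_lebesgue_integral_def G_outside .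
  also have "\<dots> = 0" using G_int by (rule integral_unique)
  finally show "(\<integral>x. G x \<partial>lebesgue) = 0" .
qed

lemma wavefrontI:
  fixes \<phi> \<phi>' Z f D g :: "real \<Rightarrow> real"
  assumes \<phi>_cont: "continuous_on UNIV \<phi>" and \<phi>_range: "\<And>\<xi>. \<phi> \<xi> \<in> {0..1}"
    and "antimono \<phi>" and lim: "(\<phi> \<longlongrightarrow> 1) at_bot" "(\<phi> \<longlongrightarrow> 0) at_top"
    and "finite N"
    and \<phi>_deriv: "\<And>\<xi>. \<xi> \<notin> N \<Longrightarrow> (\<phi> has_real_derivative \<phi>' \<xi>) (at \<xi>)"
    and flux: "\<And>\<xi>. \<xi> \<notin> N \<Longrightarrow> D (\<phi> \<xi>) * \<phi>' \<xi> = Z (\<phi> \<xi>)"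
    and balance: "\<And>\<xi>. \<xi> \<notin> N \<Longrightarrow>
      ((\<lambda>\<xi>. Z (\<phi> \<xi>) - f (\<phi> \<xi>) + c * \<phi> \<xi>) has_real_derivative - g (\<phi> \<xi>)) (at \<xi>)"
    and Z: "continuous_on {0..1} Z" and f: "continuous_on {0..1} f" and g: "continuous_on {0..1} g"
  shows "wavefront f D g c \<phi>"
proof -
  have N: "countable N" "\<And>x. x \<in> N \<Longrightarrow> emeasure lebesgue {x} = 0" "\<And>x. x \<in> N \<Longrightarrow> {x} \<in> sets lebesgue"
    using \<open>finite N\<close> by (auto simp: countable_finite)
  have comp: "continuous_on UNIV (\<lambda>\<xi>. F (\<phi> \<xi>))" if "continuous_on {0..1} F" for F :: "real \<Rightarrow> real"
    by (rule continuous_on_compose2[OF that \<phi>_cont]) (use \<phi>_range in auto)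
  have deriv_\<phi>: "deriv \<phi> \<xi> = \<phi>' \<xi>" if "\<xi> \<notin> N" for \<xi> by (rule DERIV_imp_deriv[OF \<phi>_deriv[OF that]])
  have "AE \<xi> in lebesgue. \<xi> \<notin> N" by (rule AE_discrete_difference[OF N])
  then have "AE \<xi> in lebesgue. \<phi> differentiable (at \<xi>)"
    by eventually_elim (use \<phi>_deriv in \<open>auto simp: real_differentiable_def\<close>)
  moreover have "set_integrable lebesgue {a..b} (\<lambda>\<xi>. D (\<phi> \<xi>) * deriv \<phi> \<xi>)" for a b
  proof -
    have "(\<lambda>\<xi>. Z (\<phi> \<xi>)) absolutely_integrable_on {a..b}"
      by (rule absolutely_integrable_continuous_real, rule continuous_on_subset[OF comp[OF Z]]) auto
    moreover have "integrable lebesgue (\<lambda>x. indicator {a..b} x *\<^sub>R (D (\<phi> x) * deriv \<phi> x))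
        \<longleftrightarrow> integrable lebesgue (\<lambda>x. indicator {a..b} x *\<^sub>R Z (\<phi> x))"
      by (rule integrable_discrete_difference[OF N]) (use flux deriv_\<phi> in auto)
    ultimately show ?thesis by (simp add: set_integrable_def)
  qed
  moreover have "\<not> (\<exists>k. \<forall>\<xi>. \<phi> \<xi> = k)"
  proof
    assume "\<exists>k. \<forall>\<xi>. \<phi> \<xi> = k"
    then obtain k where "\<phi> = (\<lambda>_. k)" by auto
    then show False using lim tendsto_unique[OF trivial_limit_at_bot_linorder tendsto_const]
      tendsto_unique[OF trivial_limit_at_top_linorder tendsto_const] by fastforce
  qed
  moreover have "integrable lebesgue F \<and> (\<integral>\<xi>. F \<xi> \<partial>lebesgue) = 0"
    if F: "F = (\<lambda>\<xi>. (D (\<phi> \<xi>) * deriv \<phi> \<xi> - f (\<phi> \<xi>) + c * \<phi> \<xi>) * deriv \<psi> \<xi> - g (\<phi> \<xi>) * \<psi> \<xi>)"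
      and \<psi>: "test_fun \<psi>" for \<psi> F
  proof -
    define w where "w \<xi> = Z (\<phi> \<xi>) - f (\<phi> \<xi>) + c * \<phi> \<xi>" for \<xi>
    define G where "G \<xi> = w \<xi> * deriv \<psi> \<xi> + - g (\<phi> \<xi>) * \<psi> \<xi>" for \<xi>
    have w_cont: "continuous_on UNIV w" unfolding w_def by (intro continuous_intros comp Z f \<phi>_cont)
    have g_cont: "continuous_on UNIV (\<lambda>\<xi>. - g (\<phi> \<xi>))" by (intro continuous_intros comp g)
    have w_deriv: "(w has_real_derivative - g (\<phi> \<xi>)) (at \<xi>)" if "\<xi> \<notin> N" for \<xi>
      using balance[OF that] by (simp add: w_def[abs_def])
    have "integrable lebesgue G" "(\<integral>x. G x \<partial>lebesgue) = 0"
      using integral_by_parts_test_fun[OF \<psi> \<open>finite N\<close> w_cont g_cont w_deriv]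
      by (simp_all add: G_def[abs_def])
    moreover have FG: "F x = G x" if "x \<notin> N" for x
      using flux[OF that] deriv_\<phi>[OF that] by (simp add: F G_def w_def)
    have "integrable lebesgue F \<longleftrightarrow> integrable lebesgue G"
      by (rule integrable_discrete_difference[OF N]) (use FG in auto)
    moreover have "(\<integral>x. F x \<partial>lebesgue) = (\<integral>x. G x \<partial>lebesgue)"
      by (rule integral_discrete_difference[OF N]) (use FG in auto)
    ultimately show ?thesis by simp
  qed
  ultimately show ?thesis
    unfolding wavefront_def Let_def using \<phi>_cont \<phi>_range \<open>antimono \<phi>\<close> by blast
qed

text \<open>Off a finite set, either \<open>0 < \<phi> < 1\<close>, where \<open>\<phi>\<close> inverts \<open>X\<close> and so
  \<open>\<phi>' = z(\<phi>) / D(\<phi>)\<close>, turning the ODE for \<open>z\<close> into \<open>(z - f + c id)(\<phi>)' = -g(\<phi>)\<close>;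
  or \<open>\<phi>\<close> is locally constant at 0 or 1, where \<open>z\<close> and \<open>g\<close> vanish.\<close>

lemma wavefront_profile_of:
  fixes X z f h D g :: "real \<Rightarrow> real"
  assumes X: "decreasing_primitive 0 1 E (\<lambda>u. D u / z u) X"
    and z_deriv: "\<And>u. u \<in> {0<..<1} - E \<Longrightarrow> (z has_real_derivative h u - c - D u * g u / z u) (at u)"
    and f_deriv: "\<And>u. u \<in> {0<..<1} - E \<Longrightarrow> (f has_real_derivative h u) (at u)"
    and D_nz: "\<And>u. u \<in> {0<..<1} - E \<Longrightarrow> D u \<noteq> 0"
    and z_nz: "\<And>u. u \<in> {0<..<1} - E \<Longrightarrow> z u \<noteq> 0"
    and "z 0 = 0" "z 1 = 0" "g 0 = 0" "g 1 = 0"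
    and "continuous_on {0..1} z" "continuous_on {0..1} f" "continuous_on {0..1} g"
  shows "wavefront f D g c (profile_of X)"
proof -
  define \<phi> where "\<phi> = profile_of X"
  define N where "N = X ` E \<union> {\<xi>. \<phi> \<xi> \<in> {0, 1} \<and> \<not> (\<forall>\<^sub>F y in nhds \<xi>. \<phi> y = \<phi> \<xi>)}"
  define \<phi>' where "\<phi>' \<xi> = (if \<phi> \<xi> \<in> {0<..<1} then z (\<phi> \<xi>) / D (\<phi> \<xi>) else 0)" for \<xi>
  define W where "W u = z u - f u + c * u" for u
  have range: "\<phi> \<xi> \<in> {0..1}" for \<xi> using profile_of_bounds[OF X] by (simp add: \<phi>_def)
  have "finite N"
    using decreasing_primitiveD(1)[OF X] finite_profile_of_not_locally_constant[OF X]
    by (simp add: N_def \<phi>_def)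
  have deriv: "(\<phi> has_real_derivative \<phi>' \<xi>) (at \<xi>) \<and> D (\<phi> \<xi>) * \<phi>' \<xi> = z (\<phi> \<xi>)
      \<and> ((\<lambda>\<xi>. W (\<phi> \<xi>)) has_real_derivative - g (\<phi> \<xi>)) (at \<xi>)" if "\<xi> \<notin> N" for \<xi>
  proof (cases "\<phi> \<xi> \<in> {0<..<1}")
    case True
    define u where "u = \<phi> \<xi>"
    have "X u = \<xi>" using inverse_profile_of[OF X] True by (simp add: u_def \<phi>_def)
    then have "u \<notin> E" using \<open>\<xi> \<notin> N\<close> by (auto simp: N_def)
    then have u: "u \<in> {0<..<1} - E" using True by (simp add: u_def)
    have \<phi>_deriv: "(\<phi> has_real_derivative z u / D u) (at \<xi>)"
      using profile_of_has_derivative[OF X, of \<xi>] u D_nz[OF u] z_nz[OF u] by (simp add: u_def \<phi>_def)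
    have "(W has_real_derivative (h u - c - D u * g u / z u) - h u + c) (at u)"
      unfolding W_def[abs_def] using z_deriv[OF u] f_deriv[OF u] by (auto intro!: derivative_eq_intros)
    from DERIV_chain2[OF this[unfolded u_def] \<phi>_deriv[unfolded u_def]]
    have "((\<lambda>\<xi>. W (\<phi> \<xi>)) has_real_derivative - g u) (at \<xi>)"
      using D_nz[OF u] z_nz[OF u] by (simp add: u_def field_simps)
    then show ?thesis using \<phi>_deriv D_nz[OF u] True by (simp add: u_def \<phi>'_def)
  next
    case False
    then have "\<phi> \<xi> \<in> {0, 1}" using range[of \<xi>] by auto
    then have const: "\<forall>\<^sub>F y in nhds \<xi>. \<phi> y = \<phi> \<xi>" using \<open>\<xi> \<notin> N\<close> by (auto simp: N_def)
    have "(\<phi> has_real_derivative 0) (at \<xi>)"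
      using DERIV_cong_ev[OF refl const refl] by simp
    moreover have "((\<lambda>\<xi>. W (\<phi> \<xi>)) has_real_derivative 0) (at \<xi>)"
      using DERIV_cong_ev[OF refl const[THEN eventually_mono, of "\<lambda>y. W (\<phi> y) = W (\<phi> \<xi>)"] refl]
      by simp
    ultimately show ?thesis
      using False \<open>\<phi> \<xi> \<in> {0, 1}\<close> assms(6-9) by (auto simp: \<phi>'_def)
  qed
  have "wavefront f D g c \<phi>"
  proof (rule wavefrontI[OF _ range _ _ _ \<open>finite N\<close>, where \<phi>' = \<phi>' and Z = z])
    show "continuous_on UNIV \<phi>"
      using isCont_profile_of[OF X] by (simp add: \<phi>_def continuous_at_imp_continuous_on)
    show "antimono \<phi>" using profile_of_antimono[OF X] by (auto simp: \<phi>_def intro: antimonoI)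
    show "(\<phi> \<longlongrightarrow> 1) at_bot" "(\<phi> \<longlongrightarrow> 0) at_top"
      using profile_of_at_bot[OF X] profile_of_at_top[OF X] by (simp_all add: \<phi>_def)
  qed (use deriv assms(10-12) in \<open>auto simp: W_def\<close>)
  then show ?thesis by (simp add: \<phi>_def)
qed

section \<open>Fronts from solutions of the singular ODE\<close>

lemma cond_G2_if_nonzero:
  fixes g :: "real \<Rightarrow> real"
  assumes "isCont g m" "g m \<noteq> 0"
  shows "cond_G2 g m"
proof -
  obtain \<delta> where \<delta>: "0 < \<delta>" "\<And>u. dist u m < \<delta> \<Longrightarrow> dist (g u) (g m) < \<bar>g m\<bar> / 2"
    using assms unfolding continuous_at_eps_delta by (metis half_gt_zero zero_less_abs_iff)
  have "\<bar>g m\<bar> / 2 * \<bar>u - m\<bar> powr (1/2) \<le> \<bar>g u\<bar>" if u: "\<bar>u - m\<bar> < min \<delta> 1" for u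
  proof -
    have "\<bar>u - m\<bar> powr (1/2) \<le> 1" using powr_mono2[of "1/2" "\<bar>u - m\<bar>" 1] u by simp
    then have "\<bar>g m\<bar> / 2 * \<bar>u - m\<bar> powr (1/2) \<le> \<bar>g m\<bar> / 2" by (simp add: mult_left_le)
    also have "\<dots> \<le> \<bar>g u\<bar>"
      using \<delta>(2)[of u] u abs_triangle_ineq2[of "g m" "g u"] by (simp add: dist_real_def abs_minus_commute)
    finally show ?thesis .
  qed
  then show ?thesis unfolding cond_G2_def using \<delta>(1) assms(2)
    by (intro exI[of _ "\<bar>g m\<bar> / 2"] exI[of _ "1/2"] exI[of _ "min \<delta> 1"]) auto
qed

lemma DERIV_comp_affine:
  fixes F :: "real \<Rightarrow> real"
  assumes "(F has_real_derivative F') (at (m + \<sigma> * t))"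
  shows "((\<lambda>t. F (m + \<sigma> * t)) has_real_derivative F' * \<sigma>) (at t)"
  by (rule DERIV_chain2[where g = "\<lambda>t. m + \<sigma> * t", OF assms]) (auto intro!: derivative_eq_intros)

lemma DERIV_reflected_comp_affine:
  fixes F :: "real \<Rightarrow> real"
  assumes "\<sigma> = 1 \<or> \<sigma> = -1" "(F has_real_derivative F') (at (m + \<sigma> * t))"
  shows "((\<lambda>t. - \<sigma> * F (m + \<sigma> * t)) has_real_derivative - F') (at t)"
proof -
  have "((\<lambda>t. - \<sigma> * F (m + \<sigma> * t)) has_real_derivative - \<sigma> * (F' * \<sigma>)) (at t)"
    by (intro DERIV_cmult DERIV_comp_affine assms(2))
  then show ?thesis using assms(1) by auto
qed

lemma continuous_on_comp_affine:
  fixes F :: "real \<Rightarrow> real"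
  assumes "continuous_on S F" "\<And>t. t \<in> T \<Longrightarrow> m + \<sigma> * t \<in> S"
  shows "continuous_on T (\<lambda>t. F (m + \<sigma> * t))"
  by (rule continuous_on_compose2[OF assms(1)]) (use assms(2) in \<open>auto intro!: continuous_intros\<close>)

lemma C1_01_has_derivative_at:
  assumes "C1_01 F F'" "x \<in> {0<..<1}"
  shows "(F has_real_derivative F' x) (at x)"
proof -
  have "(F has_real_derivative F' x) (at x within {0..1})" using assms by (auto simp: C1_01_def)
  then show ?thesis using at_within_interior[of x "{0..1}"] assms(2) by simp
qed

lemma C1_ode_on_has_derivative:
  assumes "C1_ode_on S z h c q" "s \<in> S"
  shows "(z has_real_derivative h s - c - q s / z s) (at s)"
  using assms by (auto simp: C1_ode_on_def DERIV_deriv_iff_real_differentiable[symmetric])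

locale front_setting =
  fixes \<alpha> c :: real and f h D D' g :: "real \<Rightarrow> real"
  assumes alpha: "0 < \<alpha>" "\<alpha> < 1"
    and f_C1: "C1_01 f h" and D_C1: "C1_01 D D'"
    and D_pos: "\<And>u. u \<in> {0<..<\<alpha>} \<Longrightarrow> 0 < D u" and D_neg: "\<And>u. u \<in> {\<alpha><..<1} \<Longrightarrow> D u < 0"
    and g_cont: "continuous_on {0..1} g" and g_0: "g 0 = 0" and g_1: "g 1 = 0"
begin

lemmas D_deriv = C1_01_has_derivative_at[OF D_C1] and f_deriv = C1_01_has_derivative_at[OF f_C1]

lemma D_cont: "continuous_on {0..1} D" and f_cont: "continuous_on {0..1} f"
  using D_C1 f_C1 by (auto simp: C1_01_def intro: DERIV_continuous_on)

lemma D_alpha: "D \<alpha> = 0"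
proof -
  have "(D \<longlongrightarrow> D \<alpha>) (at_left \<alpha>)" "(D \<longlongrightarrow> D \<alpha>) (at_right \<alpha>)"
    using DERIV_isCont[OF D_deriv] alpha by (auto simp: isCont_def filterlim_at_split)
  moreover have "\<forall>\<^sub>F u in at_left \<alpha>. 0 \<le> D u"
    unfolding eventually_at_left_field using alpha D_pos by (intro exI[of _ 0]) (auto intro: less_imp_le)
  moreover have "\<forall>\<^sub>F u in at_right \<alpha>. D u \<le> 0"
    unfolding eventually_at_right_field using alpha D_neg by (intro exI[of _ 1]) (auto intro: less_imp_le)
  ultimately show ?thesis
    using tendsto_lowerbound tendsto_upperbound by (metis order.antisym trivial_limit_at_left_real
        trivial_limit_at_right_real)
qed

lemma D_lipschitz_at_alpha:
  obtains M where "0 \<le> M" "\<And>u. u \<in> {0..1} \<Longrightarrow> \<bar>D u\<bar> \<le> M * \<bar>u - \<alpha>\<bar>"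
proof -
  obtain M where M: "0 \<le> M" "\<And>u. u \<in> {0..1} \<Longrightarrow> norm (D' u) \<le> M"
    using continuous_on_compact_bound[of "{0..1}" D'] D_C1 by (auto simp: C1_01_def)
  have "norm (D u - D \<alpha>) \<le> M * norm (u - \<alpha>)" if "u \<in> {0..1}" for u
    by (rule field_differentiable_bound[of "{0..1}" D D']) (use D_C1 M that alpha in \<open>auto simp: C1_01_def\<close>)
  then show ?thesis using that M(1) D_alpha by auto
qed

lemma D_nonzero: "u \<in> {0<..<1} - {\<alpha>} \<Longrightarrow> D u \<noteq> 0"
  using D_pos[of u] D_neg[of u] by (cases "u < \<alpha>") force+

lemma h_bound:
  obtains K where "0 \<le> K" "\<And>u. u \<in> {0..1} \<Longrightarrow> \<bar>h u - c\<bar> \<le> K"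
proof -
  have "continuous_on {0..1} (\<lambda>u. h u - c)" using f_C1 by (auto simp: C1_01_def intro!: continuous_intros)
  then show ?thesis using continuous_on_compact_bound[of "{0..1}" "\<lambda>u. h u - c"] that by auto
qed

end

text \<open>E collects the zeros of z in (\<alpha>,1): empty for problem (P), \<open>{\<gamma>}\<close> for (P').\<close>

locale front_ode = front_setting +
  fixes z :: "real \<Rightarrow> real" and E :: "real set"
  assumes z_cont: "continuous_on {0..1} z" and z_0: "z 0 = 0" and z_alpha: "z \<alpha> = 0" and z_1: "z 1 = 0"
    and z_neg: "\<And>u. u \<in> {0<..<\<alpha>} \<Longrightarrow> z u < 0" and z_pos: "\<And>u. u \<in> {\<alpha><..<1} - E \<Longrightarrow> 0 < z u"
    and z_deriv: "\<And>u. u \<in> {0<..<1} - insert \<alpha> E \<Longrightarrow>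
      (z has_real_derivative h u - c - D u * g u / z u) (at u)"
begin

lemma z_nonzero: "u \<in> {0<..<1} - insert \<alpha> E \<Longrightarrow> z u \<noteq> 0"
  using z_neg[of u] z_pos[of u] by (cases "u < \<alpha>") force+

lemma D_div_z_neg: "u \<in> {0<..<1} - insert \<alpha> E \<Longrightarrow> D u / z u < 0"
  using D_pos[of u] D_neg[of u] z_neg[of u] z_pos[of u]
  by (cases "u < \<alpha>") (auto simp: divide_pos_neg divide_neg_pos)

lemma primitive_exists:
  assumes "a < b" "{a<..<b} \<subseteq> {0<..<1} - insert \<alpha> E"
  obtains X where "decreasing_primitive a b {} (\<lambda>u. D u / z u) X"
proof (rule decreasing_primitive_exists[OF \<open>a < b\<close>])
  fix u assume "u \<in> {a<..<b}"
  then have u: "u \<in> {0<..<1} - insert \<alpha> E" using assms(2) by auto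
  show "isCont (\<lambda>u. D u / z u) u"
    using DERIV_isCont[OF D_deriv] DERIV_isCont[OF z_deriv[OF u]] z_nonzero[OF u] u
    by (auto intro!: continuous_intros)
  show "D u / z u < 0" by (rule D_div_z_neg[OF u])
qed (rule that)

text \<open>The sign \<open>\<sigma> = \<plusminus>1\<close> selects the side of the zero, t is the distance to it.\<close>

lemma primitive_bdd_near_alpha:
  assumes \<sigma>: "\<sigma> = 1 \<or> \<sigma> = -1" and G2: "cond_G2 g \<alpha>" and "0 < b"
    and side: "\<And>t. t \<in> {0<..<b} \<Longrightarrow> \<alpha> + \<sigma> * t \<in> {0<..<1} - insert \<alpha> E"
    and X: "\<And>t. t \<in> {0<..<b} \<Longrightarrow>
      (X has_real_derivative D (\<alpha> + \<sigma> * t) / z (\<alpha> + \<sigma> * t)) (at (\<alpha> + \<sigma> * t))"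
  obtains \<delta> where "0 < \<delta>" "\<delta> \<le> b" "bdd_below ((\<lambda>t. - \<sigma> * X (\<alpha> + \<sigma> * t)) ` {0<..<\<delta>})"
proof -
  obtain L \<tau> \<delta>0 where L: "0 < L" "0 < \<tau>" "\<tau> < 1" "0 < \<delta>0"
    and g_large: "\<And>u. \<bar>u - \<alpha>\<bar> < \<delta>0 \<Longrightarrow> L * \<bar>u - \<alpha>\<bar> powr \<tau> \<le> \<bar>g u\<bar>"
    using G2 unfolding cond_G2_def by blast
  obtain K where K: "0 \<le> K" "\<And>u. u \<in> {0..1} \<Longrightarrow> \<bar>h u - c\<bar> \<le> K" using h_bound by blast
  obtain G where G: "0 \<le> G" "\<And>u. u \<in> {0..1} \<Longrightarrow> \<bar>g u\<bar> \<le> G"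
    using continuous_on_compact_bound[OF compact_Icc g_cont] by auto
  obtain M where M: "0 \<le> M" "\<And>u. u \<in> {0..1} \<Longrightarrow> \<bar>D u\<bar> \<le> M * \<bar>u - \<alpha>\<bar>"
    using D_lipschitz_at_alpha by blast
  define \<delta> where "\<delta> = min (min \<delta>0 b) 1 / 2"
  have \<delta>: "0 < \<delta>" "\<delta> \<le> 1" "\<delta> < \<delta>0" "\<delta> < b" using L \<open>0 < b\<close> by (auto simp: \<delta>_def)
  have in01: "\<alpha> + \<sigma> * t \<in> {0..1}" if "t \<in> {0..\<delta>}" for t
    using side[of t] that \<delta> alpha by (cases "t = 0") auto
  have \<sigma>\<sigma>: "\<sigma> * (w * \<sigma>) = w" for w using \<sigma> by auto
  have t_side: "\<alpha> + \<sigma> * t \<in> {0<..<1} - insert \<alpha> E" "\<bar>\<alpha> + \<sigma> * t - \<alpha>\<bar> = t"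
    if "t \<in> {0<..<\<delta>}" for t
    using side[of t] that \<delta> \<sigma> by auto
  have signs: "0 < \<sigma> * z (\<alpha> + \<sigma> * t)" "\<sigma> * D (\<alpha> + \<sigma> * t) < 0" if "t \<in> {0<..<\<delta>}" for t
    using \<sigma> that z_neg[of "\<alpha> - t"] z_pos[of "\<alpha> + t"] D_neg[of "\<alpha> + t"] D_pos[of "\<alpha> - t"]
      t_side(1)[OF that] by auto
  have "bdd_below ((\<lambda>t. - \<sigma> * X (\<alpha> + \<sigma> * t)) ` {0<..<\<delta>})"
  proof (rule primitive_bdd_below_degenerate[OF \<delta>(1,2) L(2,3) L(1) K(1) mult_nonneg_nonneg[OF G(1) M(1)],
        where \<zeta> = "\<lambda>t. \<sigma> * z (\<alpha> + \<sigma> * t)" and k = "\<lambda>t. h (\<alpha> + \<sigma> * t) - c"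
        and a = "\<lambda>t. g (\<alpha> + \<sigma> * t)" and v = "\<lambda>t. - D (\<alpha> + \<sigma> * t) / z (\<alpha> + \<sigma> * t)"])
    show "continuous_on {0..\<delta>} (\<lambda>t. \<sigma> * z (\<alpha> + \<sigma> * t))"
      by (intro continuous_intros continuous_on_comp_affine[OF z_cont in01])
    show "continuous_on {0<..<\<delta>} (\<lambda>t. g (\<alpha> + \<sigma> * t))"
      by (rule continuous_on_comp_affine[OF g_cont]) (use in01 in auto)
    show "\<sigma> * z (\<alpha> + \<sigma> * 0) = 0" using z_alpha by simp
    fix t assume t: "t \<in> {0<..<\<delta>}"
    note s = t_side[OF t] and signs = signs[OF t]
    show "0 < \<sigma> * z (\<alpha> + \<sigma> * t)" by (rule signs(1))
    have "((\<lambda>t. \<sigma> * z (\<alpha> + \<sigma> * t)) has_real_derivative \<sigma> * ((h (\<alpha> + \<sigma> * t) - c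
        - D (\<alpha> + \<sigma> * t) * g (\<alpha> + \<sigma> * t) / z (\<alpha> + \<sigma> * t)) * \<sigma>)) (at t)"
      by (intro DERIV_cmult DERIV_comp_affine z_deriv s(1))
    then show "((\<lambda>t. \<sigma> * z (\<alpha> + \<sigma> * t)) has_real_derivative h (\<alpha> + \<sigma> * t) - c
        + g (\<alpha> + \<sigma> * t) * (- D (\<alpha> + \<sigma> * t) / z (\<alpha> + \<sigma> * t))) (at t)"
      unfolding \<sigma>\<sigma> by (rule DERIV_cong) (simp add: algebra_simps)
    show "\<bar>h (\<alpha> + \<sigma> * t) - c\<bar> \<le> K" using K(2) s(1) by auto
    have v: "- D (\<alpha> + \<sigma> * t) / z (\<alpha> + \<sigma> * t) = \<bar>D (\<alpha> + \<sigma> * t)\<bar> / (\<sigma> * z (\<alpha> + \<sigma> * t))"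
      using \<sigma> signs by (auto simp: abs_of_neg abs_of_pos)
    show "0 \<le> - D (\<alpha> + \<sigma> * t) / z (\<alpha> + \<sigma> * t)" unfolding v using signs(1) by simp
    have "\<bar>g (\<alpha> + \<sigma> * t)\<bar> * \<bar>D (\<alpha> + \<sigma> * t)\<bar> \<le> G * (M * t)"
      using G M(1) M(2)[of "\<alpha> + \<sigma> * t"] s by (intro mult_mono) auto
    then show "\<bar>g (\<alpha> + \<sigma> * t)\<bar> * (- D (\<alpha> + \<sigma> * t) / z (\<alpha> + \<sigma> * t))
        \<le> G * M * t / (\<sigma> * z (\<alpha> + \<sigma> * t))"
      unfolding v using signs(1) by (simp add: divide_right_mono mult.assoc)
    show "L * t powr \<tau> \<le> \<bar>g (\<alpha> + \<sigma> * t)\<bar>" using g_large[of "\<alpha> + \<sigma> * t"] s \<delta> t by auto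
    show "((\<lambda>t. - \<sigma> * X (\<alpha> + \<sigma> * t)) has_real_derivative
        - D (\<alpha> + \<sigma> * t) / z (\<alpha> + \<sigma> * t)) (at t)"
      using DERIV_reflected_comp_affine[OF \<sigma> X[of t]] t \<delta> by simp
  qed
  then show ?thesis using that \<delta> by simp
qed

lemma primitive_bdd_near_nondegenerate_zero:
  assumes \<sigma>: "\<sigma> = 1 \<or> \<sigma> = -1" and m: "\<alpha> < m" "m < 1" "z m = 0" and G2: "cond_G2 g m"
    and "0 < b" and side: "\<And>t. t \<in> {0<..<b} \<Longrightarrow> m + \<sigma> * t \<in> {\<alpha><..<1} - E"
    and g_sign: "\<And>t. t \<in> {0<..<b} \<Longrightarrow> 0 < \<sigma> * g (m + \<sigma> * t)"
    and X: "\<And>t. t \<in> {0<..<b} \<Longrightarrow>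
      (X has_real_derivative D (m + \<sigma> * t) / z (m + \<sigma> * t)) (at (m + \<sigma> * t))"
  obtains \<delta> where "0 < \<delta>" "\<delta> \<le> b" "bdd_below ((\<lambda>t. - \<sigma> * X (m + \<sigma> * t)) ` {0<..<\<delta>})"
proof -
  obtain L \<tau> \<delta>0 where L: "0 < L" "0 < \<tau>" "\<tau> < 1" "0 < \<delta>0"
    and g_large: "\<And>u. \<bar>u - m\<bar> < \<delta>0 \<Longrightarrow> L * \<bar>u - m\<bar> powr \<tau> \<le> \<bar>g u\<bar>"
    using G2 unfolding cond_G2_def by blast
  obtain K where K: "0 \<le> K" "\<And>u. u \<in> {0..1} \<Longrightarrow> \<bar>h u - c\<bar> \<le> K" using h_bound by blast
  obtain M where M: "0 \<le> M" "\<And>u. u \<in> {0..1} \<Longrightarrow> \<bar>D u\<bar> \<le> M"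
    using continuous_on_compact_bound[OF compact_Icc D_cont] by auto
  define d0 where "d0 = - D m / 2"
  have d0: "0 < d0" using D_neg[of m] m alpha by (simp add: d0_def)
  have "isCont D m" using D_deriv[of m] m alpha by (auto intro: DERIV_isCont)
  then obtain dd where dd: "0 < dd" "\<And>u. dist u m < dd \<Longrightarrow> dist (D u) (D m) < d0"
    using d0 unfolding continuous_at_eps_delta by blast
  define \<delta> where "\<delta> = min (min \<delta>0 dd) (min b 1) / 2"
  have \<delta>: "0 < \<delta>" "\<delta> \<le> 1" "\<delta> < \<delta>0" "\<delta> < dd" "\<delta> < b"
    using L dd \<open>0 < b\<close> by (auto simp: \<delta>_def)
  have in01: "m + \<sigma> * t \<in> {0..1}" if "t \<in> {0..\<delta>}" for t
    using side[of t] that \<delta> m alpha by (cases "t = 0") auto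
  have t_side: "m + \<sigma> * t \<in> {\<alpha><..<1} - E" "\<bar>m + \<sigma> * t - m\<bar> = t" if "t \<in> {0<..<\<delta>}" for t
    using side[of t] that \<delta> \<sigma> by auto
  have "bdd_below ((\<lambda>t. - \<sigma> * X (m + \<sigma> * t)) ` {0<..<\<delta>})"
  proof (rule primitive_bdd_below_nondegenerate[OF \<delta>(1,2) L(2,3) mult_pos_pos[OF d0 L(1)] K(1) M(1),
        where \<zeta> = "\<lambda>t. z (m + \<sigma> * t)"
        and \<zeta>' = "\<lambda>t. \<sigma> * (h (m + \<sigma> * t) - c - D (m + \<sigma> * t) * g (m + \<sigma> * t) / z (m + \<sigma> * t))"
        and v = "\<lambda>t. - D (m + \<sigma> * t) / z (m + \<sigma> * t)"])
    show "continuous_on {0..\<delta>} (\<lambda>t. z (m + \<sigma> * t))"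
      by (rule continuous_on_comp_affine[OF z_cont in01])
    show "z (m + \<sigma> * 0) = 0" using m by simp
    fix t assume t: "t \<in> {0<..<\<delta>}"
    define s where "s = m + \<sigma> * t"
    have s: "s \<in> {0<..<1} - insert \<alpha> E" "s \<in> {\<alpha><..<1}" "\<bar>s - m\<bar> < \<delta>0" "dist s m < dd"
      using t_side[OF t] t \<delta> alpha by (auto simp: s_def dist_real_def)
    have z_s: "0 < z s" using z_pos s by auto
    have D_s: "d0 \<le> - D s" using dd(2)[OF s(4)] by (simp add: d0_def dist_real_def abs_less_iff)
    show "0 < z (m + \<sigma> * t)" using z_s by (simp add: s_def)
    have "((\<lambda>t. z (m + \<sigma> * t)) has_real_derivative (h s - c - D s * g s / z s) * \<sigma>) (at t)"
      unfolding s_def by (intro DERIV_comp_affine z_deriv) (use s in \<open>simp add: s_def\<close>)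
    then show "((\<lambda>t. z (m + \<sigma> * t)) has_real_derivative \<sigma> * (h (m + \<sigma> * t) - c
        - D (m + \<sigma> * t) * g (m + \<sigma> * t) / z (m + \<sigma> * t))) (at t)"
      by (simp add: s_def mult.commute)
    have "\<bar>g s\<bar> = \<sigma> * g s" using g_sign[of t] t \<delta> \<sigma> by (auto simp: s_def)
    then have g_s: "L * t powr \<tau> \<le> \<sigma> * g s" using g_large[OF s(3)] t_side(2)[OF t] by (simp add: s_def)
    have "d0 * (L * t powr \<tau>) \<le> (- D s) * (\<sigma> * g s)"
      using mult_mono[OF D_s g_s] d0 D_s L by simp
    from divide_right_mono[OF this less_imp_le[OF z_s]]
    have "d0 * L * t powr \<tau> / z s \<le> (- D s) * (\<sigma> * g s) / z s" by (simp add: mult.assoc)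
    moreover have "- K \<le> \<sigma> * (h s - c)" using K(2)[of s] s \<sigma> by (auto simp: abs_le_iff)
    ultimately show "- K + d0 * L * t powr \<tau> / z (m + \<sigma> * t) \<le> \<sigma> * (h (m + \<sigma> * t) - c
        - D (m + \<sigma> * t) * g (m + \<sigma> * t) / z (m + \<sigma> * t))"
      unfolding s_def[symmetric] by (simp add: algebra_simps)
    show "0 \<le> - D (m + \<sigma> * t) / z (m + \<sigma> * t)" using D_s d0 z_s by (simp add: s_def divide_nonpos_pos)
    show "- D (m + \<sigma> * t) / z (m + \<sigma> * t) \<le> M / z (m + \<sigma> * t)"
      using M(2)[of s] s z_s by (intro divide_right_mono) (auto simp: s_def)
    show "((\<lambda>t. - \<sigma> * X (m + \<sigma> * t)) has_real_derivative
        - D (m + \<sigma> * t) / z (m + \<sigma> * t)) (at t)"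
      using DERIV_reflected_comp_affine[OF \<sigma> X[of t]] t \<delta> by simp
  qed
  then show ?thesis using that \<delta> by simp
qed

lemma glue_at_alpha:
  assumes G2: "cond_G2 g \<alpha>" and ab: "0 \<le> a" "a < \<alpha>" "\<alpha> < b" "b \<le> 1" and E: "{a<..<b} \<inter> E = {}"
    and X1: "decreasing_primitive a \<alpha> {} (\<lambda>u. D u / z u) X1"
    and X2: "decreasing_primitive \<alpha> b {} (\<lambda>u. D u / z u) X2"
  obtains X where "decreasing_primitive a b {\<alpha>} (\<lambda>u. D u / z u) X"
proof -
  obtain \<delta>1 where \<delta>1: "0 < \<delta>1" "\<delta>1 \<le> \<alpha> - a"
    and bdd1: "bdd_below ((\<lambda>t. - (-1) * X1 (\<alpha> + (-1) * t)) ` {0<..<\<delta>1})"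
  proof (rule primitive_bdd_near_alpha[where \<sigma> = "-1" and b = "\<alpha> - a", OF _ G2])
    fix t assume t: "t \<in> {0<..<\<alpha> - a}"
    then have "\<alpha> - t \<in> {a<..<b}" using ab by auto
    then have "\<alpha> - t \<notin> E" using E by blast
    then show "\<alpha> + - 1 * t \<in> {0<..<1} - insert \<alpha> E" using t ab by auto
    show "(X1 has_real_derivative D (\<alpha> + - 1 * t) / z (\<alpha> + - 1 * t)) (at (\<alpha> + - 1 * t))"
      using decreasing_primitiveD(4)[OF X1] t by simp
  qed (use ab that in auto)
  obtain \<delta>2 where \<delta>2: "0 < \<delta>2" "\<delta>2 \<le> b - \<alpha>"
    and bdd2: "bdd_below ((\<lambda>t. - 1 * X2 (\<alpha> + 1 * t)) ` {0<..<\<delta>2})"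
  proof (rule primitive_bdd_near_alpha[where \<sigma> = 1 and b = "b - \<alpha>", OF _ G2])
    fix t assume t: "t \<in> {0<..<b - \<alpha>}"
    then have "\<alpha> + t \<in> {a<..<b}" using ab by auto
    then have "\<alpha> + t \<notin> E" using E by blast
    then show "\<alpha> + 1 * t \<in> {0<..<1} - insert \<alpha> E" using t ab by auto
    show "(X2 has_real_derivative D (\<alpha> + 1 * t) / z (\<alpha> + 1 * t)) (at (\<alpha> + 1 * t))"
      using decreasing_primitiveD(4)[OF X2] t by simp
  qed (use ab that in auto)
  show ?thesis
  proof (rule decreasing_primitive_glue[OF ab(2,3) X1 X2 \<delta>1 \<delta>2])
    show "bdd_below ((\<lambda>t. X1 (\<alpha> - t)) ` {0<..<\<delta>1})" using bdd1 by simp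
    show "bdd_above ((\<lambda>t. X2 (\<alpha> + t)) ` {0<..<\<delta>2})" using bdd2 by (simp add: bdd_below_uminus_image)
  qed (use that in simp)
qed

lemma glue_at_nondegenerate_zero:
  assumes m: "\<alpha> < m" "m < 1" "z m = 0" and G2: "cond_G2 g m"
    and ab: "a \<le> a1" "\<alpha> \<le> a1" "a1 < m" "m < b" "b \<le> 1" and E: "{a1<..<b} - {m} \<subseteq> - E"
    and g_neg: "\<And>u. u \<in> {a1<..<m} \<Longrightarrow> g u < 0" and g_pos: "\<And>u. u \<in> {m<..<b} \<Longrightarrow> 0 < g u"
    and X1: "decreasing_primitive a m E1 (\<lambda>u. D u / z u) X1" "E1 \<subseteq> {..a1}"
    and X2: "decreasing_primitive m b {} (\<lambda>u. D u / z u) X2"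
  obtains X where "decreasing_primitive a b (insert m E1) (\<lambda>u. D u / z u) X"
proof -
  obtain \<delta>1 where \<delta>1: "0 < \<delta>1" "\<delta>1 \<le> m - a1"
    and bdd1: "bdd_below ((\<lambda>t. - (-1) * X1 (m + (-1) * t)) ` {0<..<\<delta>1})"
  proof (rule primitive_bdd_near_nondegenerate_zero[where \<sigma> = "-1" and b = "m - a1", OF _ m G2])
    fix t assume t: "t \<in> {0<..<m - a1}"
    then have "m - t \<in> {a1<..<b} - {m}" using ab by auto
    then have "m - t \<notin> E" using E by blast
    then show "m + - 1 * t \<in> {\<alpha><..<1} - E" using t ab m by auto
    show "0 < - 1 * g (m + - 1 * t)" using g_neg[of "m - t"] t by simp
    show "(X1 has_real_derivative D (m + - 1 * t) / z (m + - 1 * t)) (at (m + - 1 * t))"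
      using decreasing_primitiveD(4)[OF X1(1)] X1(2) t ab by force
  qed (use ab that in auto)
  obtain \<delta>2 where \<delta>2: "0 < \<delta>2" "\<delta>2 \<le> b - m"
    and bdd2: "bdd_below ((\<lambda>t. - 1 * X2 (m + 1 * t)) ` {0<..<\<delta>2})"
  proof (rule primitive_bdd_near_nondegenerate_zero[where \<sigma> = 1 and b = "b - m", OF _ m G2])
    fix t assume t: "t \<in> {0<..<b - m}"
    then have "m + t \<in> {a1<..<b} - {m}" using ab by auto
    then have "m + t \<notin> E" using E by blast
    then show "m + 1 * t \<in> {\<alpha><..<1} - E" using t ab m by auto
    show "0 < 1 * g (m + 1 * t)" using g_pos[of "m + t"] t by simp
    show "(X2 has_real_derivative D (m + 1 * t) / z (m + 1 * t)) (at (m + 1 * t))"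
      using decreasing_primitiveD(4)[OF X2] t by simp
  qed (use ab that in auto)
  show ?thesis
  proof (rule decreasing_primitive_glue[OF _ ab(4) X1(1) X2 \<delta>1(1) _ \<delta>2])
    show "bdd_below ((\<lambda>t. X1 (m - t)) ` {0<..<\<delta>1})" using bdd1 by simp
    show "bdd_above ((\<lambda>t. X2 (m + t)) ` {0<..<\<delta>2})" using bdd2 by (simp add: bdd_below_uminus_image)
  qed (use ab \<delta>1 that in simp_all)
qed

lemma wavefront_profile_of_primitive:
  assumes "decreasing_primitive 0 1 (insert \<alpha> E) (\<lambda>u. D u / z u) X"
  shows "wavefront f D g c (profile_of X) \<and> (profile_of X \<longlongrightarrow> 1) at_bot \<and> (profile_of X \<longlongrightarrow> 0) at_top"
  using wavefront_profile_of[OF assms z_deriv f_deriv D_nonzero z_nonzero z_0 z_1 g_0 g_1 z_cont f_cont g_cont]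
    profile_of_at_bot[OF assms] profile_of_at_top[OF assms] by auto

lemma front_exists_single_zero:
  assumes "E = {}" "cond_G2 g \<alpha>"
  shows "\<exists>\<phi>. wavefront f D g c \<phi> \<and> (\<phi> \<longlongrightarrow> 1) at_bot \<and> (\<phi> \<longlongrightarrow> 0) at_top"
proof -
  obtain X1 where X1: "decreasing_primitive 0 \<alpha> {} (\<lambda>u. D u / z u) X1"
    by (rule primitive_exists[of 0 \<alpha>]) (use alpha assms(1) in auto)
  obtain X2 where X2: "decreasing_primitive \<alpha> 1 {} (\<lambda>u. D u / z u) X2"
    by (rule primitive_exists[of \<alpha> 1]) (use alpha assms(1) in auto)
  obtain X where "decreasing_primitive 0 1 {\<alpha>} (\<lambda>u. D u / z u) X"
    using glue_at_alpha[OF assms(2) _ _ _ _ _ X1 X2] alpha assms(1) by auto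
  then show ?thesis using wavefront_profile_of_primitive assms(1) by auto
qed

lemma front_exists_double_zero:
  assumes E: "E = {\<gamma>}" and \<gamma>: "\<alpha> < \<gamma>" "\<gamma> < 1" "z \<gamma> = 0"
    and G2: "cond_G2 g \<alpha>" "cond_G2 g \<gamma>"
    and g_neg: "\<And>u. u \<in> {\<alpha><..<\<gamma>} \<Longrightarrow> g u < 0" and g_pos: "\<And>u. u \<in> {\<gamma><..<1} \<Longrightarrow> 0 < g u"
  shows "\<exists>\<phi>. wavefront f D g c \<phi> \<and> (\<phi> \<longlongrightarrow> 1) at_bot \<and> (\<phi> \<longlongrightarrow> 0) at_top"
proof -
  obtain X1 where X1: "decreasing_primitive 0 \<alpha> {} (\<lambda>u. D u / z u) X1"
    by (rule primitive_exists[of 0 \<alpha>]) (use alpha \<gamma> E in auto)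
  obtain X2 where X2: "decreasing_primitive \<alpha> \<gamma> {} (\<lambda>u. D u / z u) X2"
    by (rule primitive_exists[of \<alpha> \<gamma>]) (use alpha \<gamma> E in auto)
  obtain X3 where X3: "decreasing_primitive \<gamma> 1 {} (\<lambda>u. D u / z u) X3"
    by (rule primitive_exists[of \<gamma> 1]) (use alpha \<gamma> E in auto)
  obtain X12 where X12: "decreasing_primitive 0 \<gamma> {\<alpha>} (\<lambda>u. D u / z u) X12"
    using glue_at_alpha[OF G2(1) _ _ _ _ _ X1 X2] alpha \<gamma> E by auto
  obtain X where "decreasing_primitive 0 1 (insert \<gamma> {\<alpha>}) (\<lambda>u. D u / z u) X"
    using glue_at_nondegenerate_zero[OF \<gamma> G2(2) _ _ _ _ _ _ g_neg g_pos X12 _ X3] alpha \<gamma> E by auto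
  then show ?thesis using wavefront_profile_of_primitive E by (auto simp: insert_commute)
qed

end

context front_setting
begin

lemma front_ode_if_problem_P:
  assumes "problem_P h c (\<lambda>u. D u * g u) \<alpha> z"
  shows "front_ode \<alpha> c f h D D' g z {}"
  using assms C1_ode_on_has_derivative[of "{0<..<1} - {\<alpha>}" z h c]
  by unfold_locales (auto simp: problem_P_def)

lemma front_ode_if_problem_P':
  assumes "problem_P' h c (\<lambda>u. D u * g u) \<alpha> \<gamma> z" "\<alpha> < \<gamma>"
  shows "front_ode \<alpha> c f h D D' g z {\<gamma>}"
  using assms C1_ode_on_has_derivative[of "{0<..<1} - {\<alpha>, \<gamma>}" z h c]
  by unfold_locales (auto simp: problem_P'_def)

end

theorem proposition3p3:
  fixes \<alpha> \<gamma> c :: real and f h D D' g q :: "real \<Rightarrow> real"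
  assumes "0 < \<alpha>" "\<alpha> < 1" "0 < \<gamma>" "\<gamma> < 1"
    and "C1_01 f h" and "f 0 = 0"
    and "C1_01 D D'"
    and "\<forall>u\<in>{0<..<\<alpha>}. D u > 0" and "\<forall>u\<in>{\<alpha><..<1}. D u < 0"
    and "continuous_on {0..1} g"
    and "\<forall>u\<in>{0<..<\<gamma>}. g u < 0" and "\<forall>u\<in>{\<gamma><..<1}. g u > 0"
    and "g 0 = 0" "g \<gamma> = 0" "g 1 = 0"
    and "\<forall>u. q u = D u * g u"
    and "((\<exists>z. problem_P h c q \<alpha> z) \<and> (\<alpha> \<noteq> \<gamma> \<or> (\<alpha> = \<gamma> \<and> cond_G2 g \<gamma>)))
         \<or> ((\<exists>z. problem_P' h c q \<alpha> \<gamma> z \<and> z \<gamma> = 0) \<and> \<alpha> < \<gamma> \<and> cond_G2 g \<gamma>)"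
  shows "\<exists>\<phi>. wavefront f D g c \<phi> \<and> (\<phi> \<longlongrightarrow> 1) at_bot \<and> (\<phi> \<longlongrightarrow> 0) at_top"
proof -
  txt \<open>Unused: \<open>f 0 = 0\<close> is a normalization (constants in f integrate to zero
    against \<open>\<psi>'\<close>), and \<open>g \<gamma> = 0\<close> follows from the signs of g and continuity.\<close>
  interpret front_setting \<alpha> c f h D D' g
    using assms by unfold_locales auto
  have q: "q = (\<lambda>u. D u * g u)" using assms(16) by auto
  have "cond_G2 g \<alpha>" if "\<alpha> \<noteq> \<gamma>"
  proof (rule cond_G2_if_nonzero)
    show "isCont g \<alpha>"
      using g_cont alpha continuous_on_interior[of "{0..1}" g \<alpha>] by simp
    show "g \<alpha> \<noteq> 0"
      using assms(11,12)[rule_format, of \<alpha>] alpha that by (cases "\<alpha> < \<gamma>") auto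
  qed
  then consider (P) z where "problem_P h c q \<alpha> z" "cond_G2 g \<alpha>"
    | (P') z where "problem_P' h c q \<alpha> \<gamma> z" "z \<gamma> = 0" "\<alpha> < \<gamma>" "cond_G2 g \<alpha>" "cond_G2 g \<gamma>"
    using assms(17) by blast
  then show ?thesis
  proof cases
    case P
    then interpret front_ode \<alpha> c f h D D' g z "{}" using front_ode_if_problem_P q by simp
    show ?thesis using front_exists_single_zero P by simp
  next
    case P'
    then interpret front_ode \<alpha> c f h D D' g z "{\<gamma>}" using front_ode_if_problem_P' q by simp
    show ?thesis using front_exists_double_zero[of \<gamma>] P' assms(4,11,12) alpha by auto
  qed
qed

end
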